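(* Let $(b,c)$ be a connected canonically compactifiable weighted graph over $X$ and let $m:X\to(0,\infty)$ satisfy $m(X)<\infty$. Let $Q^{(D)}$ be the form with Dirichlet boundary conditions and $L^{(D)}$ the associated operator. Then $$D(Q^{(D)})=\{u\in\widetilde D:\hat u|_{\partial X}=0\}=\widetilde D_o,$$ and $$D(L^{(D)})=\{f\in\widetilde D:\ \hat f|_{\partial X}=0\ \text{ and }\ \widetilde Lf\in\ell^2(X,m)\},$$ where $L^{(D)}f=\widetilde Lf$ for $f\in D(L^{(D)})$.
   Context: Let $X$ be a countably infinite set. A weighted graph $(b,c)$ over $X$ consists of a symmetric $b:X\times X\to[0,\infty)$ with $b(x,x)=0$ and $\sum_{y}b(x,y)<\infty$ for all $x$, and $c:X\to[0,\infty)$; connected means any two distinct vertices are joined by a finite path of pairwise distinct vertices with consecutive ones satisfying $b>0$. Let $\widetilde Q(f)=\frac12\sum_{x,y}b(x,y)|f(x)-f(y)|^2+\sum_x c(x)|f(x)|^2$ and $\widetilde D=\{f:\widetilde Q(f)<\infty\}$; the graph is canonically compactifiable if $\widetilde D\subseteq\ell^\infty(X)$. For $f\in\widetilde D$, $\widetilde Lf(x)=\frac1{m(x)}\big(\sum_y b(x,y)(f(x)-f(y))+c(x)f(x)\big)$. On $\ell^2(X,m)$ (inner product $\sum_x\overline{u(x)}v(x)m(x)$, norm $\|\cdot\|$), $Q^{(D)}$ is the restriction of $\widetilde Q$ to the closure of the finitely supported functions $C_c(X)$ with respect to $\|u\|_{\widetilde Q}=(\widetilde Q(u)+\|u\|^2)^{1/2}$;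 $L^{(D)}$ is the associated selfadjoint operator. For fixed $o\in X$, $\widetilde D_o$ is the closure of $C_c(X)$ in $\widetilde D$ w.r.t. $\|f\|_o=(\widetilde Q(f)+|f(o)|^2)^{1/2}$. Let $\mathcal A$ be the sup-norm closure of $\widetilde D$ in $\ell^\infty(X)$, $\mathcal A^+$ the smallest $C^*$-subalgebra of $\ell^\infty(X)$ containing $\mathcal A$ and $1$, $K$ its set of characters (nonzero multiplicative linear functionals) with the weak-$*$ topology, $\hat g(\gamma)=\gamma(g)$; via $x\mapsto\delta_x$ ($\delta_x(f)=f(x)$) view $X\subseteq K$ and let $\partial X=K\setminus X$. *)

theory Defs
  imports "HOL-Analysis.Analysis" "HOL-Library.Countable"
begin

definition weighted_graph :: "('x \<Rightarrow> 'x \<Rightarrow> real) \<Rightarrow> ('x \<Rightarrow> real) \<Rightarrow> bool" where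
  "weighted_graph b c \<longleftrightarrow>
     (\<forall>x y. b x y = b y x) \<and> (\<forall>x y. 0 \<le> b x y) \<and> (\<forall>x. b x x = 0) \<and>
     (\<forall>x. (\<lambda>y. b x y) summable_on UNIV) \<and> (\<forall>x. 0 \<le> c x)"

definition connected_graph :: "('x \<Rightarrow> 'x \<Rightarrow> real) \<Rightarrow> bool" where
  "connected_graph b \<longleftrightarrow>
     (\<forall>x y. x \<noteq> y \<longrightarrow> (\<exists>xs. xs \<noteq> [] \<and> hd xs = x \<and> last xs = y \<and> distinct xs \<and>
        (\<forall>i. Suc i < length xs \<longrightarrow> 0 < b (xs ! i) (xs ! Suc i))))"

definition Qt_finite :: "('x \<Rightarrow> 'x \<Rightarrow> real) \<Rightarrow> ('x \<Rightarrow> real) \<Rightarrow> ('x \<Rightarrow> complex) \<Rightarrow> bool" where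
  "Qt_finite b c f \<longleftrightarrow>
     (\<lambda>(x,y). b x y * (cmod (f x - f y))\<^sup>2) summable_on UNIV \<and>
     (\<lambda>x. c x * (cmod (f x))\<^sup>2) summable_on UNIV"

definition Qt :: "('x \<Rightarrow> 'x \<Rightarrow> real) \<Rightarrow> ('x \<Rightarrow> real) \<Rightarrow> ('x \<Rightarrow> complex) \<Rightarrow> real" where
  "Qt b c f = (1/2) * (\<Sum>\<^sub>\<infinity>(x,y). b x y * (cmod (f x - f y))\<^sup>2)
              + (\<Sum>\<^sub>\<infinity>x. c x * (cmod (f x))\<^sup>2)"

definition Dt :: "('x \<Rightarrow> 'x \<Rightarrow> real) \<Rightarrow> ('x \<Rightarrow> real) \<Rightarrow> ('x \<Rightarrow> complex) set" where
  "Dt b c = {f. Qt_finite b c f}"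

definition linf :: "('x \<Rightarrow> complex) set" where
  "linf = {f. bounded (range f)}"

definition canonically_compactifiable :: "('x \<Rightarrow> 'x \<Rightarrow> real) \<Rightarrow> ('x \<Rightarrow> real) \<Rightarrow> bool" where
  "canonically_compactifiable b c \<longleftrightarrow> Dt b c \<subseteq> linf"

definition Lt :: "('x \<Rightarrow> 'x \<Rightarrow> real) \<Rightarrow> ('x \<Rightarrow> real) \<Rightarrow> ('x \<Rightarrow> real) \<Rightarrow> ('x \<Rightarrow> complex) \<Rightarrow> ('x \<Rightarrow> complex)" where
  "Lt b c m f = (\<lambda>x. complex_of_real (1 / m x) *
      ((\<Sum>\<^sub>\<infinity>y. complex_of_real (b x y) * (f x - f y)) + complex_of_real (c x) * f x))"

definition ell2 :: "('x \<Rightarrow> real) \<Rightarrow> ('x \<Rightarrow> complex) set" where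
  "ell2 m = {f. (\<lambda>x. m x * (cmod (f x))\<^sup>2) summable_on UNIV}"

definition l2norm_sq :: "('x \<Rightarrow> real) \<Rightarrow> ('x \<Rightarrow> complex) \<Rightarrow> real" where
  "l2norm_sq m f = (\<Sum>\<^sub>\<infinity>x. m x * (cmod (f x))\<^sup>2)"

definition inner_m :: "('x \<Rightarrow> real) \<Rightarrow> ('x \<Rightarrow> complex) \<Rightarrow> ('x \<Rightarrow> complex) \<Rightarrow> complex" where
  "inner_m m u v = (\<Sum>\<^sub>\<infinity>x. cnj (u x) * v x * complex_of_real (m x))"

definition Cc :: "('x \<Rightarrow> complex) set" where
  "Cc = {\<phi>. finite {x. \<phi> x \<noteq> 0}}"

definition Qform :: "('x \<Rightarrow> 'x \<Rightarrow> real) \<Rightarrow> ('x \<Rightarrow> real) \<Rightarrow> ('x \<Rightarrow> complex) \<Rightarrow> ('x \<Rightarrow> complex) \<Rightarrow> complex" where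
  "Qform b c u v = (1/2) * (\<Sum>\<^sub>\<infinity>(x,y). complex_of_real (b x y) * cnj (u x - u y) * (v x - v y))
                 + (\<Sum>\<^sub>\<infinity>x. complex_of_real (c x) * cnj (u x) * v x)"

text \<open>D(Q^(D)): closure of C_c(X) w.r.t. the form norm (Qt(u) + ||u||^2)^(1/2).\<close>
definition DQD :: "('x \<Rightarrow> 'x \<Rightarrow> real) \<Rightarrow> ('x \<Rightarrow> real) \<Rightarrow> ('x \<Rightarrow> real) \<Rightarrow> ('x \<Rightarrow> complex) set" where
  "DQD b c m = {u. u \<in> Dt b c \<and> u \<in> ell2 m \<and>
      (\<forall>\<epsilon>>0. \<exists>\<phi>\<in>Cc. Qt b c (u - \<phi>) + l2norm_sq m (u - \<phi>) < \<epsilon>)}"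

text \<open>The selfadjoint operator L^(D) associated with Q^(D):
  u in D(L^(D)) with L^(D) u = w iff u in D(Q^(D)), w in l^2 and Q(u,v) = <w,v> for all v in D(Q^(D)).\<close>
definition LD_rel :: "('x \<Rightarrow> 'x \<Rightarrow> real) \<Rightarrow> ('x \<Rightarrow> real) \<Rightarrow> ('x \<Rightarrow> real) \<Rightarrow> ('x \<Rightarrow> complex) \<Rightarrow> ('x \<Rightarrow> complex) \<Rightarrow> bool" where
  "LD_rel b c m u w \<longleftrightarrow> u \<in> DQD b c m \<and> w \<in> ell2 m \<and>
      (\<forall>v\<in>DQD b c m. Qform b c u v = inner_m m w v)"

definition DLD :: "('x \<Rightarrow> 'x \<Rightarrow> real) \<Rightarrow> ('x \<Rightarrow> real) \<Rightarrow> ('x \<Rightarrow> real) \<Rightarrow> ('x \<Rightarrow> complex) set" where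
  "DLD b c m = {u. \<exists>w. LD_rel b c m u w}"

definition LD :: "('x \<Rightarrow> 'x \<Rightarrow> real) \<Rightarrow> ('x \<Rightarrow> real) \<Rightarrow> ('x \<Rightarrow> real) \<Rightarrow> ('x \<Rightarrow> complex) \<Rightarrow> ('x \<Rightarrow> complex)" where
  "LD b c m u = (THE w. LD_rel b c m u w)"

text \<open>Dt_o: closure of C_c(X) in Dt w.r.t. ||f||_o = (Qt(f) + |f(o)|^2)^(1/2).\<close>
definition Dt_o :: "('x \<Rightarrow> 'x \<Rightarrow> real) \<Rightarrow> ('x \<Rightarrow> real) \<Rightarrow> 'x \<Rightarrow> ('x \<Rightarrow> complex) set" where
  "Dt_o b c x0 = {u. u \<in> Dt b c \<and>
      (\<forall>\<epsilon>>0. \<exists>\<phi>\<in>Cc. Qt b c (u - \<phi>) + (cmod (u x0 - \<phi> x0))\<^sup>2 < \<epsilon>)}"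

definition Aalg :: "('x \<Rightarrow> 'x \<Rightarrow> real) \<Rightarrow> ('x \<Rightarrow> real) \<Rightarrow> ('x \<Rightarrow> complex) set" where
  "Aalg b c = {g. g \<in> linf \<and>
      (\<forall>\<epsilon>>0. \<exists>f\<in>Dt b c \<inter> linf. \<forall>x. cmod (g x - f x) \<le> \<epsilon>)}"

definition cstar_subalgebra :: "('x \<Rightarrow> complex) set \<Rightarrow> bool" where
  "cstar_subalgebra S \<longleftrightarrow> S \<subseteq> linf \<and> (\<lambda>_. 0) \<in> S \<and>
     (\<forall>f\<in>S. \<forall>g\<in>S. (\<lambda>x. f x + g x) \<in> S \<and> (\<lambda>x. f x * g x) \<in> S) \<and>
     (\<forall>a. \<forall>f\<in>S. (\<lambda>x. a * f x) \<in> S) \<and>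
     (\<forall>f\<in>S. (\<lambda>x. cnj (f x)) \<in> S) \<and>
     (\<forall>g\<in>linf. (\<forall>\<epsilon>>0. \<exists>f\<in>S. \<forall>x. cmod (g x - f x) \<le> \<epsilon>) \<longrightarrow> g \<in> S)"

definition Aplus :: "('x \<Rightarrow> 'x \<Rightarrow> real) \<Rightarrow> ('x \<Rightarrow> real) \<Rightarrow> ('x \<Rightarrow> complex) set" where
  "Aplus b c = \<Inter>{S. cstar_subalgebra S \<and> Aalg b c \<subseteq> S \<and> (\<lambda>_. 1) \<in> S}"

text \<open>Characters of A^+ (nonzero multiplicative linear functionals), represented as
  functions on all of 'x => complex that vanish outside A^+ (so each character has a
  unique representative).\<close>
definition characters :: "('x \<Rightarrow> 'x \<Rightarrow> real) \<Rightarrow> ('x \<Rightarrow> real) \<Rightarrow> (('x \<Rightarrow> complex) \<Rightarrow> complex) set" where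
  "characters b c = {\<gamma>.
      (\<forall>f\<in>Aplus b c. \<forall>g\<in>Aplus b c. \<gamma> (\<lambda>x. f x + g x) = \<gamma> f + \<gamma> g \<and>
                                   \<gamma> (\<lambda>x. f x * g x) = \<gamma> f * \<gamma> g) \<and>
      (\<forall>a. \<forall>f\<in>Aplus b c. \<gamma> (\<lambda>x. a * f x) = a * \<gamma> f) \<and>
      (\<exists>f\<in>Aplus b c. \<gamma> f \<noteq> 0) \<and>
      (\<forall>f. f \<notin> Aplus b c \<longrightarrow> \<gamma> f = 0)}"

definition point_char :: "('x \<Rightarrow> 'x \<Rightarrow> real) \<Rightarrow> ('x \<Rightarrow> real) \<Rightarrow> 'x \<Rightarrow> (('x \<Rightarrow> complex) \<Rightarrow> complex)" where
  "point_char b c x = (\<lambda>f. if f \<in> Aplus b c then f x else 0)"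

text \<open>The boundary \<partial>X = K \ X.\<close>
definition boundary :: "('x \<Rightarrow> 'x \<Rightarrow> real) \<Rightarrow> ('x \<Rightarrow> real) \<Rightarrow> (('x \<Rightarrow> complex) \<Rightarrow> complex) set" where
  "boundary b c = characters b c - range (point_char b c)"

definition gelfand_hat :: "('x \<Rightarrow> complex) \<Rightarrow> (('x \<Rightarrow> complex) \<Rightarrow> complex) \<Rightarrow> complex" where
  "gelfand_hat u \<gamma> = \<gamma> u"

end

theory Submission
  imports Defs
begin

text \<open>On a connected canonically compactifiable graph the sup norm is dominated by
  \<open>\<parallel>f\<parallel>\<^sub>o = (Qt f + |f o|\<^sup>2)\<^sup>1\<^sup>/\<^sup>2\<close> on \<open>Dt\<close> (a closed-graph argument, carried out with a series), and
  \<open>m(X) < \<infinity>\<close> puts \<open>Dt\<close> inside \<open>\<ell>\<^sup>2(X,m)\<close>. Hence the closures of \<open>C\<^sub>c(X)\<close> in the form norm and in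
  \<open>\<parallel>\<cdot>\<parallel>\<^sub>o\<close> both consist of the functions of finite energy vanishing at infinity: convergence in either
  norm is uniform, and conversely cutting a function off at a small height approximates it.

  A function of finite energy vanishes at infinity iff its Gelfand transform vanishes on \<open>\<partial>X\<close>:
  boundary characters kill \<open>C\<^sub>c(X)\<close> and are bounded by the sup norm, while if \<open>|u| \<ge> \<epsilon>\<close> on an
  infinite set, a cluster point of the point evaluations there is a boundary character not
  vanishing at \<open>u\<close>. Finally Green's formula identifies the operator of the form with \<open>Lt\<close>
  on those \<open>f\<close> with \<open>Lt f \<in> \<ell>\<^sup>2\<close>.\<close>

definition wsq :: "('i \<Rightarrow> real) \<Rightarrow> ('i \<Rightarrow> complex) \<Rightarrow> 'i \<Rightarrow> real" where
  "wsq w a i = w i * (cmod (a i))\<^sup>2"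

lemma wsq_nonneg: "(\<And>i. 0 \<le> w i) \<Longrightarrow> 0 \<le> wsq w a i"
  by (simp add: wsq_def)

lemma wsq_zero [simp]: "wsq w (\<lambda>_. 0) = (\<lambda>_. 0)"
  by (simp add: wsq_def fun_eq_iff)

lemma wsq_dominated:
  assumes w: "\<And>i. 0 \<le> w i" and a: "wsq w a summable_on A"
    and le: "\<And>i. i \<in> A \<Longrightarrow> cmod (a' i) \<le> cmod (a i)"
  shows "wsq w a' summable_on A" "infsum (wsq w a') A \<le> infsum (wsq w a) A"
proof -
  have pt: "wsq w a' i \<le> wsq w a i" if "i \<in> A" for i
    unfolding wsq_def using le[OF that] w[of i] by (simp add: mult_left_mono power_mono)
  show "wsq w a' summable_on A"
    by (rule summable_on_comparison_test[OF a]) (auto simp: pt wsq_nonneg w)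
  then show "infsum (wsq w a') A \<le> infsum (wsq w a) A"
    using a pt by (intro infsum_mono) auto
qed

lemma norm_add_sq_le: "(cmod (p + q))\<^sup>2 \<le> 2 * (cmod p)\<^sup>2 + 2 * (cmod q)\<^sup>2"
proof -
  have "(cmod (p + q))\<^sup>2 \<le> (cmod p + cmod q)\<^sup>2"
    by (simp add: norm_triangle_ineq power_mono)
  also have "\<dots> \<le> 2 * (cmod p)\<^sup>2 + 2 * (cmod q)\<^sup>2"
    using zero_le_power2[of "cmod p - cmod q"] by (simp add: power2_eq_square algebra_simps)
  finally show ?thesis .
qed

lemma wsq_add:
  assumes w: "\<And>i. 0 \<le> w i" and a: "wsq w a summable_on A" and a': "wsq w a' summable_on A"
  shows "wsq w (\<lambda>i. a i + a' i) summable_on A"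
proof (rule summable_on_comparison_test)
  show "(\<lambda>i. 2 * wsq w a i + 2 * wsq w a' i) summable_on A"
    using a a' by (intro summable_on_add summable_on_cmult_right)
  show "wsq w (\<lambda>i. a i + a' i) i \<le> 2 * wsq w a i + 2 * wsq w a' i" for i
  proof -
    have "w i * (cmod (a i + a' i))\<^sup>2 \<le> w i * (2 * (cmod (a i))\<^sup>2 + 2 * (cmod (a' i))\<^sup>2)"
      using w[of i] norm_add_sq_le by (intro mult_left_mono) auto
    then show ?thesis by (simp add: wsq_def algebra_simps)
  qed
qed (simp add: wsq_nonneg w)

lemma wsq_scale: "wsq w (\<lambda>i. k * a i) = (\<lambda>i. (cmod k)\<^sup>2 * wsq w a i)"
  by (auto simp: wsq_def fun_eq_iff norm_mult power_mult_distrib)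

lemma wsq_inner_summable:
  assumes w: "\<And>i. 0 \<le> w i" and a: "wsq w a summable_on A" and h: "wsq w h summable_on A"
  shows "(\<lambda>i. complex_of_real (w i) * cnj (a i) * h i) summable_on A"
proof -
  have "w i * (cmod (a i) * cmod (h i)) \<le> w i * (((cmod (a i))\<^sup>2 + (cmod (h i))\<^sup>2) * (1/2))" for i
    using sum_squares_bound[of "cmod (a i)" "cmod (h i)"] w[of i] by (intro mult_left_mono) auto
  then have le: "w i * (cmod (a i) * cmod (h i)) \<le> (wsq w a i + wsq w h i) * (1/2)" for i
    by (simp add: wsq_def distrib_left)
  have "(\<lambda>i. (wsq w a i + wsq w h i) * (1/2)) summable_on A"
    using a h by (intro summable_on_cmult_left summable_on_add)
  then have "(\<lambda>i. w i * (cmod (a i) * cmod (h i))) summable_on A"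
    by (rule summable_on_comparison_test) (use le w in auto)
  then show ?thesis
    using w by (simp add: summable_on_iff_abs_summable_on_complex norm_mult abs_of_nonneg mult.assoc)
qed

lemma norm_infsum_wsq_inner_le:
  assumes w: "\<And>i. 0 \<le> w i" and a: "wsq w a summable_on A" and h: "wsq w h summable_on A"
  shows "cmod (infsum (\<lambda>i. complex_of_real (w i) * cnj (a i) * h i) A)
       \<le> sqrt (infsum (wsq w a) A) * sqrt (infsum (wsq w h) A)"
proof -
  define p where "p i = w i * (cmod (a i) * cmod (h i))" for i
  have np: "cmod (complex_of_real (w i) * cnj (a i) * h i) = p i" for i
    using w[of i] by (simp add: p_def norm_mult)
  have p: "p summable_on A"
    using wsq_inner_summable[OF w a h] by (simp add: summable_on_iff_abs_summable_on_complex np)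
  have "sum p F \<le> sqrt (infsum (wsq w a) A) * sqrt (infsum (wsq w h) A)"
    if F: "finite F" "F \<subseteq> A" for F
  proof -
    have "(sqrt (w i) * cmod (a i)) * (sqrt (w i) * cmod (h i)) = p i" for i
      using w[of i] unfolding p_def
      by (metis (no_types) mult.assoc mult.left_commute real_sqrt_mult_self abs_of_nonneg)
    then have "sum p F = (\<Sum>i\<in>F. (sqrt (w i) * cmod (a i)) * (sqrt (w i) * cmod (h i)))"
      by simp
    also have "\<dots> \<le> sqrt (sum (wsq w a) F * sum (wsq w h) F)"
      using Cauchy_Schwarz_ineq_sum[where a = "\<lambda>i. sqrt (w i) * cmod (a i)" and I = F
          and b = "\<lambda>i. sqrt (w i) * cmod (h i)"] w
      by (intro real_le_rsqrt) (simp add: wsq_def power_mult_distrib)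
    also have "\<dots> \<le> sqrt (infsum (wsq w a) A) * sqrt (infsum (wsq w h) A)"
    proof -
      have nn: "0 \<le> wsq w a i" "0 \<le> wsq w h i" for i by (simp_all add: wsq_nonneg w)
      have "sum (wsq w a) F \<le> infsum (wsq w a) A" "sum (wsq w h) F \<le> infsum (wsq w h) A"
        using finite_sum_le_infsum[OF a F] finite_sum_le_infsum[OF h F] nn by auto
      then show ?thesis
        unfolding real_sqrt_mult using nn by (intro mult_mono real_sqrt_le_mono) (auto intro: sum_nonneg infsum_nonneg)
    qed
    finally show ?thesis .
  qed
  then have "infsum p A \<le> sqrt (infsum (wsq w a) A) * sqrt (infsum (wsq w h) A)"
    by (rule infsum_le_finite_sums[OF p])
  moreover have "cmod (infsum (\<lambda>i. complex_of_real (w i) * cnj (a i) * h i) A) \<le> infsum p A"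
    using norm_infsum_bound[of "\<lambda>i. complex_of_real (w i) * cnj (a i) * h i" A] p by (simp add: np)
  ultimately show ?thesis by linarith
qed

lemma infsum_wsq_inner_diff:
  assumes w: "\<And>i. 0 \<le> w i" and a: "wsq w a summable_on A"
    and h: "wsq w h summable_on A" and h': "wsq w h' summable_on A"
  shows "infsum (\<lambda>i. complex_of_real (w i) * cnj (a i) * (h i - h' i)) A
       = infsum (\<lambda>i. complex_of_real (w i) * cnj (a i) * h i) A
       - infsum (\<lambda>i. complex_of_real (w i) * cnj (a i) * h' i) A"
proof -
  note s = wsq_inner_summable[OF w a h] wsq_inner_summable[OF w a h']
  have "infsum (\<lambda>i. complex_of_real (w i) * cnj (a i) * (h i - h' i)) A
      = infsum (\<lambda>i. complex_of_real (w i) * cnj (a i) * h i + - (complex_of_real (w i) * cnj (a i) * h' i)) A"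
    by (simp add: algebra_simps)
  also have "\<dots> = infsum (\<lambda>i. complex_of_real (w i) * cnj (a i) * h i) A
       - infsum (\<lambda>i. complex_of_real (w i) * cnj (a i) * h' i) A"
    using infsum_add[OF s(1) summable_on_uminus[THEN iffD2, OF s(2)]] by (simp add: infsum_uminus)
  finally show ?thesis .
qed

lemma infsum_finite_split:
  fixes f :: "'i \<Rightarrow> 'b::{topological_ab_group_add, t2_space}"
  assumes "f summable_on UNIV" "finite F"
  shows "infsum f UNIV = sum f F + infsum f (-F)"
  using infsum_Un_disjoint[of f F "-F"] assms
  by (simp add: Un_commute summable_on_cofin_subset Compl_eq_Diff_UNIV)

text \<open>Split off a finite set carrying all but \<open>\<eta>/2\<close> of the mass; on it, use the pointwise bound \<open>\<delta>\<close>.\<close>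
lemma wsq_small:
  assumes w: "\<And>i. 0 \<le> w i" and a: "wsq w a summable_on UNIV" and \<eta>: "\<eta> > 0"
  obtains \<delta> where "\<delta> > 0"
    "\<And>a'. (\<And>i. cmod (a' i) \<le> cmod (a i)) \<Longrightarrow> (\<And>i. cmod (a' i) \<le> \<delta>) \<Longrightarrow> infsum (wsq w a') UNIV < \<eta>"
proof -
  obtain F where F: "finite F" "dist (sum (wsq w a) F) (infsum (wsq w a) UNIV) \<le> \<eta>/2"
    using has_sum_finite_approximation[OF has_sum_infsum[OF a], of "\<eta>/2"] \<eta> by auto
  define W where "W = sum w F"
  have W: "0 \<le> W" unfolding W_def by (intro sum_nonneg w)
  define \<delta> where "\<delta> = sqrt (\<eta> / (2 * (W + 1)))"
  have \<delta>: "\<delta> > 0" "\<delta>\<^sup>2 * W < \<eta>/2"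
    using \<eta> W by (auto simp: \<delta>_def field_simps)
  show ?thesis
  proof (rule that[OF \<delta>(1)])
    fix a' assume le: "\<And>i. cmod (a' i) \<le> cmod (a i)" and small: "\<And>i. cmod (a' i) \<le> \<delta>"
    have a': "wsq w a' summable_on UNIV" using wsq_dominated(1)[OF w a le] .
    have "sum (wsq w a') F \<le> sum (\<lambda>i. \<delta>\<^sup>2 * w i) F"
      using w small by (intro sum_mono) (auto simp: wsq_def mult.commute intro!: mult_left_mono power_mono)
    also have "\<dots> = \<delta>\<^sup>2 * W" by (simp add: W_def sum_distrib_left)
    finally have head: "sum (wsq w a') F < \<eta>/2" using \<delta>(2) by linarith
    have "infsum (wsq w a') (-F) \<le> infsum (wsq w a) (-F)"
      using wsq_dominated(2)[OF w summable_on_cofin_subset[OF a F(1)] le]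
      by (simp add: Compl_eq_Diff_UNIV)
    also have "\<dots> = infsum (wsq w a) UNIV - sum (wsq w a) F"
      using infsum_finite_split[OF a F(1)] by simp
    also have "\<dots> \<le> \<eta>/2" using F(2) unfolding dist_real_def abs_le_iff by linarith
    finally show "infsum (wsq w a') UNIV < \<eta>"
      using head infsum_finite_split[OF a' F(1)] by simp
  qed
qed

lemma summable_on_sq_limit:
  fixes w :: "'i \<Rightarrow> real" and A :: "nat \<Rightarrow> 'i \<Rightarrow> real"
  assumes w: "\<And>i. 0 \<le> w i" and lim: "\<And>i. (\<lambda>N. A N i) \<longlonglongrightarrow> L i"
    and bd: "\<And>N F. finite F \<Longrightarrow> (\<Sum>i\<in>F. w i * (A N i)\<^sup>2) \<le> K"
  shows "(\<lambda>i. w i * (L i)\<^sup>2) summable_on UNIV"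
proof -
  have "(\<Sum>i\<in>F. w i * (L i)\<^sup>2) \<le> K" if "finite F" for F
  proof -
    have "(\<lambda>N. \<Sum>i\<in>F. w i * (A N i)\<^sup>2) \<longlonglongrightarrow> (\<Sum>i\<in>F. w i * (L i)\<^sup>2)"
      by (intro tendsto_sum tendsto_mult tendsto_const tendsto_power lim)
    then show ?thesis by (rule LIMSEQ_le_const2) (use bd[OF that] in auto)
  qed
  then show ?thesis
    by (intro nonneg_bdd_above_summable_on bdd_aboveI[where M = K]) (auto simp: w)
qed

lemma sum_sq_le_geometric:
  fixes d :: "nat \<Rightarrow> real"
  shows "(\<Sum>n<N. d n)\<^sup>2 \<le> 2 * (\<Sum>n<N. 2^n * (d n)\<^sup>2)"
proof -
  have geom: "(\<Sum>n<N. (1/2::real)^n) = 2 - 2 * (1/2)^N"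
    by (induction N) (auto simp: field_simps)
  have "(\<Sum>n<N. d n) = (\<Sum>n<N. sqrt ((1/2)^n) * (sqrt (2^n) * d n))"
    by (intro sum.cong) (auto simp: mult.assoc[symmetric] real_sqrt_mult[symmetric] power_mult_distrib[symmetric])
  then have "(\<Sum>n<N. d n)\<^sup>2 \<le> (\<Sum>n<N. (1/2)^n) * (\<Sum>n<N. 2^n * (d n)\<^sup>2)"
    using Cauchy_Schwarz_ineq_sum[of "\<lambda>n. sqrt ((1/2)^n)" "\<lambda>n. sqrt (2^n) * d n" "{..<N}"]
    by (simp add: power_mult_distrib)
  also have "\<dots> \<le> 2 * (\<Sum>n<N. 2^n * (d n)\<^sup>2)"
    unfolding geom by (intro mult_right_mono sum_nonneg) auto
  finally show ?thesis .
qed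

text \<open>Fatou's lemma combined with \<open>sum_sq_le_geometric\<close>, whose weights \<open>2\<^sup>n\<close> are absorbed by the
  decay \<open>4\<^sup>-\<^sup>n\<close>.\<close>
lemma summable_on_sq_series_limit:
  fixes w :: "'i \<Rightarrow> real" and a :: "nat \<Rightarrow> 'i \<Rightarrow> complex" and A :: "nat \<Rightarrow> 'i \<Rightarrow> real"
  assumes w: "\<And>i. 0 \<le> w i" and a: "\<And>n. wsq w (a n) summable_on UNIV"
    and decay: "\<And>n. infsum (wsq w (a n)) UNIV \<le> k * (1/4)^n"
    and partial: "\<And>N i. \<bar>A N i\<bar> \<le> (\<Sum>n<N. cmod (a n i))"
    and lim: "\<And>i. (\<lambda>N. A N i) \<longlonglongrightarrow> L i"
  shows "(\<lambda>i. w i * (L i)\<^sup>2) summable_on UNIV"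
proof (rule summable_on_sq_limit[OF w lim])
  fix N and F :: "'i set" assume F: "finite F"
  have k: "0 \<le> k" using decay[of 0] infsum_nonneg[of UNIV "wsq w (a 0)"] wsq_nonneg[OF w] by force
  have "(\<Sum>i\<in>F. w i * (A N i)\<^sup>2) \<le> (\<Sum>i\<in>F. w i * (2 * (\<Sum>n<N. 2^n * (cmod (a n i))\<^sup>2)))"
  proof (intro sum_mono mult_left_mono w)
    fix i
    have "(A N i)\<^sup>2 \<le> (\<Sum>n<N. cmod (a n i))\<^sup>2"
      using partial[of N i] by (simp add: abs_le_square_iff[symmetric] sum_nonneg)
    then show "(A N i)\<^sup>2 \<le> 2 * (\<Sum>n<N. 2^n * (cmod (a n i))\<^sup>2)"
      using sum_sq_le_geometric order_trans by blast
  qed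
  also have "\<dots> = 2 * (\<Sum>n<N. 2^n * sum (wsq w (a n)) F)"
    by (simp add: wsq_def sum_distrib_left sum_distrib_right sum.swap[of _ F] algebra_simps)
  also have "\<dots> \<le> 2 * (\<Sum>n<N. 2^n * (k * (1/4)^n))"
  proof (rule mult_left_mono[OF sum_mono])
    fix n
    have "sum (wsq w (a n)) F \<le> infsum (wsq w (a n)) UNIV"
      using finite_sum_le_infsum[OF a F] by (simp add: wsq_nonneg w)
    then show "2^n * sum (wsq w (a n)) F \<le> 2^n * (k * (1/4)^n)"
      using decay[of n] by simp
  qed simp
  also have "\<dots> = 2 * k * (\<Sum>n<N. (1/2)^n)"
    by (simp add: sum_distrib_left power_mult_distrib[symmetric] algebra_simps)
  also have "(\<Sum>n<N. (1/2::real)^n) = 2 - 2 * (1/2)^N"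
    by (induction N) (auto simp: field_simps)
  also have "2 * k * (2 - 2 * (1/2)^N) \<le> 4 * k"
    using k by (simp add: algebra_simps)
  finally show "(\<Sum>i\<in>F. w i * (A N i)\<^sup>2) \<le> 4 * k" .
qed

lemma compact_Pi_UNIV:
  fixes K :: "'a \<Rightarrow> 'b::topological_space set"
  assumes "\<And>i. compact (K i)"
  shows "compact (Pi\<^sub>E UNIV K)"
proof -
  have "compactin (product_topology (\<lambda>_. euclidean) UNIV) (Pi\<^sub>E UNIV K)"
    using assms by (simp add: compactin_PiE)
  then show ?thesis by (simp add: euclidean_product_topology)
qed

lemma cluster_point_in_closed:
  assumes "inf (nhds l) F \<noteq> bot" "closed C" "eventually (\<lambda>x. x \<in> C) F"
  shows "l \<in> C"
proof (rule ccontr)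
  assume "l \<notin> C"
  then have "eventually (\<lambda>x. x \<in> -C) (nhds l)"
    using assms(2) by (intro eventually_nhds_in_open) auto
  then have "eventually (\<lambda>x. False) (inf (nhds l) F)"
    using assms(3) unfolding eventually_inf by blast
  then show False using assms(1) by (simp add: trivial_limit_def)
qed

lemma Cc_induct [consumes 1, case_names zero indicator add scale]:
  assumes "\<phi> \<in> Cc" "P (\<lambda>_. 0)" "\<And>z. P (indicator {z})"
    "\<And>f g. P f \<Longrightarrow> P g \<Longrightarrow> P (\<lambda>x. f x + g x)" "\<And>k f. P f \<Longrightarrow> P (\<lambda>x. k * f x)"
  shows "P \<phi>"
proof -
  define F where "F = {x. \<phi> x \<noteq> 0}"
  have F: "finite F" using assms(1) by (simp add: Cc_def F_def)
  have "\<phi> = (\<lambda>y. \<Sum>z\<in>F. \<phi> z * indicator {z} y)"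
  proof
    fix y
    have "(\<Sum>z\<in>F. \<phi> z * indicator {z} y) = (if y \<in> F then \<phi> y else 0)"
      using F by (simp add: indicator_def sum.delta' if_distrib[of "\<lambda>t. _ * t"] cong: if_cong)
    then show "\<phi> y = (\<Sum>z\<in>F. \<phi> z * indicator {z} y)" by (simp add: F_def)
  qed
  moreover have "P (\<lambda>y. \<Sum>z\<in>F. k z * indicator {z} y)" for k :: "_ \<Rightarrow> complex"
    using F
  proof (induction F rule: finite_induct)
    case (insert a F)
    then have "P (\<lambda>y. k a * indicator {a} y + (\<Sum>z\<in>F. k z * indicator {z} y))"
      by (intro assms(3-5))
    moreover have "(\<lambda>y. \<Sum>z\<in>insert a F. k z * indicator {z} y)
        = (\<lambda>y. k a * indicator {a} y + (\<Sum>z\<in>F. k z * indicator {z} y))"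
      by (simp only: sum.insert[OF insert.hyps])
    ultimately show ?case by simp
  qed (simp add: assms(2))
  ultimately show ?thesis by metis
qed

definition grad :: "('x \<Rightarrow> complex) \<Rightarrow> 'x \<times> 'x \<Rightarrow> complex" where
  "grad f = (\<lambda>(x,y). f x - f y)"

definition Dt_o_norm :: "('x \<Rightarrow> 'x \<Rightarrow> real) \<Rightarrow> ('x \<Rightarrow> real) \<Rightarrow> 'x \<Rightarrow> ('x \<Rightarrow> complex) \<Rightarrow> real" where
  "Dt_o_norm b c x0 f = sqrt (Qt b c f + (cmod (f x0))\<^sup>2)"

locale wgraph =
  fixes b :: "'x \<Rightarrow> 'x \<Rightarrow> real" and c :: "'x \<Rightarrow> real"
  assumes weighted: "weighted_graph b c"
begin

lemma b_sym: "b x y = b y x" and b_nonneg: "0 \<le> b x y"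
  and b_summable: "b x summable_on UNIV" and c_nonneg: "0 \<le> c x"
  using weighted unfolding weighted_graph_def by auto

definition edge_weight :: "'x \<times> 'x \<Rightarrow> real" where
  "edge_weight = (\<lambda>(x,y). b x y)"

lemma edge_weight_nonneg: "0 \<le> edge_weight e"
  by (auto simp: edge_weight_def b_nonneg split: prod.splits)

lemma energy_eq: "(\<lambda>(x,y). b x y * (cmod (f x - f y))\<^sup>2) = wsq edge_weight (grad f)"
  by (auto simp: fun_eq_iff wsq_def edge_weight_def grad_def)

lemma killing_eq: "(\<lambda>x. c x * (cmod (f x))\<^sup>2) = wsq c f"
  by (auto simp: fun_eq_iff wsq_def)

lemma mem_Dt_iff: "f \<in> Dt b c \<longleftrightarrow> wsq edge_weight (grad f) summable_on UNIV \<and> wsq c f summable_on UNIV"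
  by (simp add: Dt_def Qt_finite_def energy_eq killing_eq)

lemma Qt_eq: "Qt b c f = infsum (wsq edge_weight (grad f)) UNIV / 2 + infsum (wsq c f) UNIV"
  by (simp add: Qt_def energy_eq[symmetric] killing_eq[symmetric])

lemma Qt_nonneg: "0 \<le> Qt b c f"
  unfolding Qt_eq by (intro add_nonneg_nonneg divide_nonneg_nonneg infsum_nonneg)
     (auto intro: wsq_nonneg edge_weight_nonneg c_nonneg)

lemma infsum_energy_le_Qt: "infsum (wsq edge_weight (grad f)) UNIV \<le> 2 * Qt b c f"
  unfolding Qt_eq by (simp add: infsum_nonneg wsq_nonneg c_nonneg)

lemma infsum_killing_le_Qt: "infsum (wsq c f) UNIV \<le> Qt b c f"
  unfolding Qt_eq by (simp add: infsum_nonneg wsq_nonneg edge_weight_nonneg)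

lemma Dt_add: "f \<in> Dt b c \<Longrightarrow> g \<in> Dt b c \<Longrightarrow> (\<lambda>x. f x + g x) \<in> Dt b c"
proof -
  have "grad (\<lambda>x. f x + g x) = (\<lambda>e. grad f e + grad g e)" by (auto simp: grad_def fun_eq_iff)
  then show "f \<in> Dt b c \<Longrightarrow> g \<in> Dt b c \<Longrightarrow> (\<lambda>x. f x + g x) \<in> Dt b c"
    by (simp add: mem_Dt_iff wsq_add edge_weight_nonneg c_nonneg)
qed

lemma Qt_scale: "Qt b c (\<lambda>x. k * f x) = (cmod k)\<^sup>2 * Qt b c f"
proof -
  have "grad (\<lambda>x. k * f x) = (\<lambda>e. k * grad f e)" by (auto simp: grad_def fun_eq_iff algebra_simps)
  then show ?thesis by (simp add: Qt_eq wsq_scale infsum_cmult_right' add_divide_distrib distrib_left)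
qed

lemma Dt_scale: "f \<in> Dt b c \<Longrightarrow> (\<lambda>x. k * f x) \<in> Dt b c"
proof -
  have "grad (\<lambda>x. k * f x) = (\<lambda>e. k * grad f e)" by (auto simp: grad_def fun_eq_iff algebra_simps)
  then show "f \<in> Dt b c \<Longrightarrow> (\<lambda>x. k * f x) \<in> Dt b c"
    by (simp add: mem_Dt_iff wsq_scale summable_on_cmult_right)
qed

lemma Dt_diff: "f \<in> Dt b c \<Longrightarrow> g \<in> Dt b c \<Longrightarrow> (\<lambda>x. f x - g x) \<in> Dt b c"
  using Dt_add[OF _ Dt_scale, of f g "-1"] by simp

lemma zero_Dt: "(\<lambda>_. 0) \<in> Dt b c"
  by (simp add: mem_Dt_iff grad_def case_prod_unfold)

lemma edge_row_summable: "(\<lambda>(x,y). if x = z then b x y else 0) summable_on UNIV"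
proof -
  have "(\<lambda>(x,y). if x = z then b x y else 0) summable_on UNIV \<times> UNIV"
  proof (rule summable_on_SigmaI)
    show "((\<lambda>y. case (x, y) of (x, y) \<Rightarrow> if x = z then b x y else 0) has_sum
        (if x = z then infsum (b z) UNIV else 0)) UNIV" for x
      using b_summable[of z] by (auto simp: has_sum_infsum)
    show "(\<lambda>x. if x = z then infsum (b z) UNIV else 0) summable_on UNIV"
      by (rule finite_nonzero_values_imp_summable_on) (auto intro: finite_subset[of _ "{z}"])
  qed (simp add: b_nonneg)
  then show ?thesis by simp
qed

lemma indicator_Dt: "(indicator {z} :: 'x \<Rightarrow> complex) \<in> Dt b c"
proof -
  define r where "r = (\<lambda>(x,y). if x = z then b x y else 0)"
  have r: "r summable_on UNIV" unfolding r_def by (rule edge_row_summable)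
  then have "(\<lambda>e. r (prod.swap e)) summable_on UNIV"
    using summable_on_reindex_bij_betw[OF bij_swap, of r] by simp
  then have "(\<lambda>e. r e + r (prod.swap e)) summable_on UNIV" using r by (intro summable_on_add)
  then have "wsq edge_weight (grad (indicator {z})) summable_on UNIV"
    by (rule summable_on_comparison_test)
      (auto simp: r_def wsq_def edge_weight_def grad_def indicator_def b_nonneg b_sym wsq_nonneg edge_weight_nonneg)
  moreover have "wsq c (indicator {z}) summable_on UNIV"
    by (rule finite_nonzero_values_imp_summable_on) (auto simp: wsq_def indicator_def intro: finite_subset[of _ "{z}"])
  ultimately show ?thesis by (simp add: mem_Dt_iff)
qed

lemma Cc_Dt: "\<phi> \<in> Cc \<Longrightarrow> \<phi> \<in> Dt b c"
  by (induction rule: Cc_induct) (auto intro: zero_Dt indicator_Dt Dt_add Dt_scale)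

lemma edge_diff_bound:
  assumes "0 < b x y" "f \<in> Dt b c"
  shows "cmod (f x - f y) \<le> sqrt (2 / b x y) * sqrt (Qt b c f)"
proof -
  have "wsq edge_weight (grad f) (x,y) \<le> infsum (wsq edge_weight (grad f)) UNIV"
    using finite_sum_le_infsum[of "wsq edge_weight (grad f)" UNIV "{(x,y)}"] assms(2)
    by (simp add: mem_Dt_iff wsq_nonneg edge_weight_nonneg)
  then have "b x y * (cmod (f x - f y))\<^sup>2 \<le> 2 * Qt b c f"
    using infsum_energy_le_Qt[of f] by (simp add: wsq_def edge_weight_def grad_def)
  then have "(cmod (f x - f y))\<^sup>2 \<le> 2 / b x y * Qt b c f"
    using assms(1) by (simp add: field_simps)
  then show ?thesis by (metis real_le_rsqrt real_sqrt_mult)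
qed

lemma path_diff_bound:
  "xs \<noteq> [] \<Longrightarrow> (\<forall>i. Suc i < length xs \<longrightarrow> 0 < b (xs!i) (xs!Suc i)) \<Longrightarrow>
    \<exists>K\<ge>0. \<forall>f\<in>Dt b c. cmod (f (last xs) - f (hd xs)) \<le> K * sqrt (Qt b c f)"
proof (induction xs)
  case (Cons a ys)
  show ?case
  proof (cases "ys = []")
    case False
    have "\<forall>i. Suc i < length ys \<longrightarrow> 0 < b (ys!i) (ys!Suc i)"
      using Cons.prems(2) by (metis Suc_less_eq length_Cons nth_Cons_Suc)
    then obtain K where K: "K \<ge> 0" "\<forall>f\<in>Dt b c. cmod (f (last ys) - f (hd ys)) \<le> K * sqrt (Qt b c f)"
      using Cons.IH False by blast
    have edge: "0 < b a (hd ys)"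
      using Cons.prems(2)[rule_format, of 0] False by (simp add: hd_conv_nth)
    show ?thesis
    proof (intro exI[of _ "K + sqrt (2 / b a (hd ys))"] conjI ballI)
      show "0 \<le> K + sqrt (2 / b a (hd ys))" using K edge by simp
      fix f assume f: "f \<in> Dt b c"
      have "cmod (f (last (a#ys)) - f (hd (a#ys))) \<le> cmod (f (last ys) - f (hd ys)) + cmod (f (hd ys) - f a)"
        using False norm_triangle_ineq[of "f (last ys) - f (hd ys)" "f (hd ys) - f a"] by simp
      also have "\<dots> \<le> K * sqrt (Qt b c f) + sqrt (2 / b a (hd ys)) * sqrt (Qt b c f)"
        using K(2) f edge_diff_bound[OF edge f] by (intro add_mono) (auto simp: norm_minus_commute)
      finally show "cmod (f (last (a#ys)) - f (hd (a#ys))) \<le> (K + sqrt (2 / b a (hd ys))) * sqrt (Qt b c f)"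
        by (simp add: algebra_simps)
    qed
  qed (intro exI[of _ 0], simp)
qed simp

lemma sqrt_Qt_le_Dt_o_norm: "sqrt (Qt b c f) \<le> Dt_o_norm b c x0 f"
  by (simp add: Dt_o_norm_def)

lemma Dt_o_norm_nonneg: "0 \<le> Dt_o_norm b c x0 f"
  by (simp add: Dt_o_norm_def Qt_nonneg)

lemma norm_le_Dt_o_norm: "cmod (f x0) \<le> Dt_o_norm b c x0 f"
  using Qt_nonneg[of f] by (simp add: Dt_o_norm_def real_le_rsqrt)

lemma Dt_o_norm_scale: "Dt_o_norm b c x0 (\<lambda>x. k * f x) = cmod k * Dt_o_norm b c x0 f"
proof -
  have "Qt b c (\<lambda>x. k * f x) + (cmod (k * f x0))\<^sup>2 = (cmod k)\<^sup>2 * (Qt b c f + (cmod (f x0))\<^sup>2)"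
    by (simp add: Qt_scale norm_mult power_mult_distrib distrib_left)
  then show ?thesis by (simp add: Dt_o_norm_def real_sqrt_mult)
qed

lemma point_bound:
  assumes "connected_graph b"
  shows "\<exists>K\<ge>0. \<forall>f\<in>Dt b c. cmod (f x) \<le> K * Dt_o_norm b c x0 f"
proof (cases "x = x0")
  case True then show ?thesis using norm_le_Dt_o_norm by (intro exI[of _ 1]) auto
next
  case False
  then obtain xs where xs: "xs \<noteq> []" "hd xs = x0" "last xs = x"
      "\<forall>i. Suc i < length xs \<longrightarrow> 0 < b (xs!i) (xs!Suc i)"
    using assms unfolding connected_graph_def by metis
  obtain K where K: "K \<ge> 0" "\<forall>f\<in>Dt b c. cmod (f x - f x0) \<le> K * sqrt (Qt b c f)"
    using path_diff_bound[OF xs(1) xs(4)] xs(2,3) by auto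
  show ?thesis
  proof (intro exI[of _ "K + 1"] conjI ballI)
    show "0 \<le> K + 1" using K(1) by simp
    fix f assume "f \<in> Dt b c"
    then have "cmod (f x) \<le> K * sqrt (Qt b c f) + cmod (f x0)"
      using K(2) norm_triangle_ineq[of "f x - f x0" "f x0"] by fastforce
    also have "\<dots> \<le> (K + 1) * Dt_o_norm b c x0 f"
      using mult_left_mono[OF sqrt_Qt_le_Dt_o_norm K(1), of f x0] norm_le_Dt_o_norm[of f x0]
      by (simp add: algebra_simps)
    finally show "cmod (f x) \<le> (K + 1) * Dt_o_norm b c x0 f" .
  qed
qed

lemma Dt_abs_series:
  assumes h: "\<And>n. h n \<in> Dt b c" and Q: "\<And>n. Qt b c (h n) \<le> (1/4)^n"
    and conv: "\<And>x. summable (\<lambda>n. cmod (h n x))"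
  shows "(\<lambda>x. complex_of_real (\<Sum>n. cmod (h n x))) \<in> Dt b c"
proof -
  define g where "g x = (\<Sum>n. cmod (h n x))" for x
  have lim: "(\<lambda>N. \<Sum>n<N. cmod (h n x)) \<longlonglongrightarrow> g x" for x
    unfolding g_def using conv by (rule summable_LIMSEQ)
  have "(\<lambda>e. edge_weight e * ((\<lambda>(x,y). g x - g y) e)\<^sup>2) summable_on UNIV"
  proof (rule summable_on_sq_series_limit[OF edge_weight_nonneg, where a = "\<lambda>n. grad (h n)" and k = 2
        and A = "\<lambda>N (x,y). (\<Sum>n<N. cmod (h n x)) - (\<Sum>n<N. cmod (h n y))"])
    show "infsum (wsq edge_weight (grad (h n))) UNIV \<le> 2 * (1/4)^n" for n
      using infsum_energy_le_Qt[of "h n"] Q[of n] by simp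
    show "\<bar>(\<lambda>(x,y). (\<Sum>n<N. cmod (h n x)) - (\<Sum>n<N. cmod (h n y))) e\<bar> \<le> (\<Sum>n<N. cmod (grad (h n) e))"
      for N e
    proof -
      obtain x y where e: "e = (x,y)" by (cases e)
      have "\<bar>(\<Sum>n<N. cmod (h n x)) - (\<Sum>n<N. cmod (h n y))\<bar> \<le> (\<Sum>n<N. \<bar>cmod (h n x) - cmod (h n y)\<bar>)"
        by (simp only: sum_subtractf[symmetric] sum_abs)
      also have "\<dots> \<le> (\<Sum>n<N. cmod (grad (h n) e))"
        by (intro sum_mono) (simp add: grad_def e norm_triangle_ineq3)
      finally show ?thesis by (simp add: e)
    qed
    show "(\<lambda>N. (\<lambda>(x,y). (\<Sum>n<N. cmod (h n x)) - (\<Sum>n<N. cmod (h n y))) e) \<longlonglongrightarrow> (\<lambda>(x,y). g x - g y) e"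
      for e by (cases e) (auto intro!: tendsto_diff lim)
  qed (use h in \<open>simp add: mem_Dt_iff\<close>)
  moreover have "(\<lambda>x. c x * (g x)\<^sup>2) summable_on UNIV"
    using h infsum_killing_le_Qt order_trans[OF _ Q]
    by (intro summable_on_sq_series_limit[OF c_nonneg _ _ _ lim, where a = h and k = 1])
      (auto simp: mem_Dt_iff sum_nonneg)
  moreover have "wsq edge_weight (grad (\<lambda>x. complex_of_real (g x))) = (\<lambda>e. edge_weight e * ((\<lambda>(x,y). g x - g y) e)\<^sup>2)"
    by (auto simp: fun_eq_iff wsq_def grad_def simp flip: of_real_diff)
  moreover have "wsq c (\<lambda>x. complex_of_real (g x)) = (\<lambda>x. c x * (g x)\<^sup>2)"
    by (auto simp: fun_eq_iff wsq_def)
  ultimately show ?thesis by (simp add: mem_Dt_iff g_def)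
qed

end

locale cc_graph = wgraph b c for b :: "'x \<Rightarrow> 'x \<Rightarrow> real" and c +
  assumes connected: "connected_graph b"
    and compactifiable: "canonically_compactifiable b c"
begin

lemma Dt_bounded: "f \<in> Dt b c \<Longrightarrow> \<exists>M. \<forall>x. cmod (f x) \<le> M"
  using compactifiable by (auto simp: canonically_compactifiable_def linf_def bounded_iff)

lemma normalised_sequence_if_unbounded:
  assumes unbounded: "\<not> (\<exists>C. \<forall>f\<in>Dt b c. \<forall>x. cmod (f x) \<le> C * Dt_o_norm b c x0 f)"
  obtains h xn where "\<And>n. h n \<in> Dt b c" "\<And>n. Dt_o_norm b c x0 (h n) \<le> (1/2)^n"
    "\<And>n. real n + 1 < cmod (h n (xn n))"
proof -
  have "\<exists>h x. h \<in> Dt b c \<and> Dt_o_norm b c x0 h \<le> (1/2)^n \<and> real n + 1 < cmod (h x)" for n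
  proof -
    obtain f x where f: "f \<in> Dt b c" and big: "2^n * (real n + 1) * Dt_o_norm b c x0 f < cmod (f x)"
      using unbounded by (meson not_le)
    obtain K where "\<forall>f\<in>Dt b c. cmod (f x) \<le> K * Dt_o_norm b c x0 f"
      using point_bound[OF connected] by blast
    then have "Dt_o_norm b c x0 f \<noteq> 0" using f big by force
    then have pos: "0 < Dt_o_norm b c x0 f" using Dt_o_norm_nonneg[of x0 f] by linarith
    define t where "t = 1 / (2^n * Dt_o_norm b c x0 f)"
    have t: "0 < t" using pos by (simp add: t_def)
    show ?thesis
    proof (intro exI conjI)
      show "(\<lambda>y. complex_of_real t * f y) \<in> Dt b c" using Dt_scale[OF f] .
      show "Dt_o_norm b c x0 (\<lambda>y. complex_of_real t * f y) \<le> (1/2)^n"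
        using pos t unfolding Dt_o_norm_scale norm_of_real by (simp add: t_def power_one_over)
      have "real n + 1 = t * (2^n * (real n + 1) * Dt_o_norm b c x0 f)"
        using pos by (simp add: t_def)
      also have "\<dots> < t * cmod (f x)" using big t by simp
      finally show "real n + 1 < cmod (complex_of_real t * f x)" using t by (simp add: norm_mult)
    qed
  qed
  then obtain h xn where "\<And>n. h n \<in> Dt b c" "\<And>n. Dt_o_norm b c x0 (h n) \<le> (1/2)^n"
    "\<And>n. real n + 1 < cmod (h n (xn n))"
    by metis
  then show ?thesis by (rule that)
qed

text \<open>The closed graph theorem for the inclusion of \<open>(Dt, \<parallel>\<cdot>\<parallel>\<^sub>o)\<close> into \<open>\<ell>\<^sup>\<infinity>\<close>, proved directly:
  otherwise the normalised functions \<open>h\<^sub>n\<close> would sum to an unbounded function of finite energy.\<close>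
lemma sup_le_Dt_o_norm: "\<exists>C>0. \<forall>f\<in>Dt b c. \<forall>x. cmod (f x) \<le> C * Dt_o_norm b c x0 f"
proof -
  have "\<exists>C. \<forall>f\<in>Dt b c. \<forall>x. cmod (f x) \<le> C * Dt_o_norm b c x0 f"
  proof (rule ccontr)
    assume "\<not> ?thesis"
    then obtain h xn where h: "\<And>n. h n \<in> Dt b c" and small: "\<And>n. Dt_o_norm b c x0 (h n) \<le> (1/2)^n"
        and big: "\<And>n. real n + 1 < cmod (h n (xn n))"
      using normalised_sequence_if_unbounded by blast
    have "Qt b c (h n) \<le> (1/4)^n" for n
    proof -
      have "sqrt (Qt b c (h n)) \<le> (1/2)^n"
        using order_trans[OF sqrt_Qt_le_Dt_o_norm small] .
      then have "(sqrt (Qt b c (h n)))\<^sup>2 \<le> ((1/2)^n)\<^sup>2" by (intro power_mono) (simp_all add: Qt_nonneg)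
      also have "((1/2::real)^n)\<^sup>2 = (1/4)^n" by (simp add: power2_eq_square flip: power_mult_distrib)
      finally show ?thesis using Qt_nonneg[of "h n"] by simp
    qed
    moreover have conv: "summable (\<lambda>n. cmod (h n x))" for x
    proof -
      obtain K where K: "K \<ge> 0" "\<forall>f\<in>Dt b c. cmod (f x) \<le> K * Dt_o_norm b c x0 f"
        using point_bound[OF connected] by blast
      have "cmod (h n x) \<le> K * (1/2)^n" for n
        using K(2) h[of n] mult_left_mono[OF small[of n] K(1)] by fastforce
      then show ?thesis
        by (intro summable_comparison_test'[where N = 0, OF summable_mult[OF summable_geometric]]) auto
    qed
    ultimately have "(\<lambda>x. complex_of_real (\<Sum>n. cmod (h n x))) \<in> Dt b c"
      using h by (intro Dt_abs_series)
    then obtain M where "\<And>x. \<bar>\<Sum>n. cmod (h n x)\<bar> \<le> M"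
      using Dt_bounded by fastforce
    then have M: "\<And>x. (\<Sum>n. cmod (h n x)) \<le> M" using abs_ge_self order_trans by blast
    define n where "n = nat \<lceil>M\<rceil>"
    have "cmod (h n (xn n)) \<le> (\<Sum>k. cmod (h k (xn n)))"
      using sum_le_suminf[OF conv[of "xn n"], of "{n}"] by simp
    then show False using M[of "xn n"] big[of n] unfolding n_def by linarith
  qed
  then obtain C where C: "\<forall>f\<in>Dt b c. \<forall>x. cmod (f x) \<le> C * Dt_o_norm b c x0 f" ..
  have "cmod (f x) \<le> (\<bar>C\<bar> + 1) * Dt_o_norm b c x0 f" if "f \<in> Dt b c" for f x
  proof -
    have "cmod (f x) \<le> C * Dt_o_norm b c x0 f" using C that by blast
    also have "\<dots> \<le> (\<bar>C\<bar> + 1) * Dt_o_norm b c x0 f" by (intro mult_right_mono Dt_o_norm_nonneg) simp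
    finally show ?thesis .
  qed
  then show ?thesis by (intro exI[of _ "\<bar>C\<bar> + 1"]) auto
qed

end

definition vanishes_at_infinity :: "('x \<Rightarrow> complex) \<Rightarrow> bool" where
  "vanishes_at_infinity f \<longleftrightarrow> (\<forall>\<epsilon>>0. finite {x. \<epsilon> \<le> cmod (f x)})"

lemma Cc_vanishes_at_infinity:
  assumes "\<phi> \<in> Cc" shows "vanishes_at_infinity \<phi>"
  unfolding vanishes_at_infinity_def
proof (intro allI impI)
  fix \<epsilon> :: real assume "\<epsilon> > 0"
  then have "{x. \<epsilon> \<le> cmod (\<phi> x)} \<subseteq> {x. \<phi> x \<noteq> 0}" by auto
  then show "finite {x. \<epsilon> \<le> cmod (\<phi> x)}" using assms by (simp add: Cc_def finite_subset)
qed

lemma vanishes_at_infinity_if_uniform_Cc_limit: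
  assumes "\<And>\<epsilon>. \<epsilon> > 0 \<Longrightarrow> \<exists>\<phi>\<in>Cc. \<forall>x. cmod (u x - \<phi> x) < \<epsilon>"
  shows "vanishes_at_infinity u"
  unfolding vanishes_at_infinity_def
proof (intro allI impI)
  fix \<epsilon> :: real assume "\<epsilon> > 0"
  then obtain \<phi> where \<phi>: "\<phi> \<in> Cc" "\<forall>x. cmod (u x - \<phi> x) < \<epsilon>" using assms by blast
  then have "{x. \<epsilon> \<le> cmod (u x)} \<subseteq> {x. \<phi> x \<noteq> 0}"
    by (metis (mono_tags) diff_zero mem_Collect_eq not_less subsetI)
  then show "finite {x. \<epsilon> \<le> cmod (u x)}" using \<phi>(1) by (auto simp: Cc_def intro: finite_subset)
qed

context cc_graph
begin

lemma Dt_o_vanishes_at_infinity: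
  assumes u: "u \<in> Dt_o b c x0"
  shows "vanishes_at_infinity u"
proof (rule vanishes_at_infinity_if_uniform_Cc_limit)
  fix \<epsilon> :: real assume \<epsilon>: "\<epsilon> > 0"
  obtain C where C: "C > 0" "\<forall>f\<in>Dt b c. \<forall>x. cmod (f x) \<le> C * Dt_o_norm b c x0 f"
    using sup_le_Dt_o_norm by blast
  obtain \<phi> where \<phi>: "\<phi> \<in> Cc" "Qt b c (u - \<phi>) + (cmod (u x0 - \<phi> x0))\<^sup>2 < (\<epsilon> / C)\<^sup>2"
  proof -
    have "(\<epsilon> / C)\<^sup>2 > 0" using \<epsilon> C by simp
    then show ?thesis using that u unfolding Dt_o_def by blast
  qed
  have diff: "(\<lambda>x. u x - \<phi> x) \<in> Dt b c"
    using u Cc_Dt[OF \<phi>(1)] by (auto simp: Dt_o_def intro: Dt_diff)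
  have small: "Dt_o_norm b c x0 (\<lambda>x. u x - \<phi> x) < \<epsilon> / C"
    using \<phi>(2) \<epsilon> C real_sqrt_less_mono by (fastforce simp: Dt_o_norm_def fun_diff_def)
  show "\<exists>\<phi>\<in>Cc. \<forall>x. cmod (u x - \<phi> x) < \<epsilon>"
  proof (intro bexI[OF _ \<phi>(1)] allI)
    fix x
    have "cmod (u x - \<phi> x) \<le> C * Dt_o_norm b c x0 (\<lambda>x. u x - \<phi> x)"
      using C(2)[rule_format, OF diff] by simp
    also have "\<dots> < \<epsilon>" using small C(1) by (simp add: field_simps)
    finally show "cmod (u x - \<phi> x) < \<epsilon>" .
  qed
qed

end

definition cutoff :: "real \<Rightarrow> complex \<Rightarrow> complex" where
  "cutoff e z = closest_point (cball 0 e) z"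

lemma cutoff_lipschitz: "0 \<le> e \<Longrightarrow> cmod (cutoff e z - cutoff e w) \<le> cmod (z - w)"
  using closest_point_lipschitz[of "cball (0::complex) e" z w] by (simp add: cutoff_def dist_norm)

lemma norm_cutoff_le_bound: "0 \<le> e \<Longrightarrow> cmod (cutoff e z) \<le> e"
  using closest_point_in_set[of "cball (0::complex) e" z] by (simp add: cutoff_def)

lemma cutoff_id: "cmod z \<le> e \<Longrightarrow> cutoff e z = z"
  by (simp add: cutoff_def closest_point_self)

lemma norm_cutoff_le: "0 \<le> e \<Longrightarrow> cmod (cutoff e z) \<le> cmod z"
  using cutoff_lipschitz[of e z 0] cutoff_id[of 0 e] by simp

lemma cutoff_remainder_Cc:
  assumes "vanishes_at_infinity u" "e > 0"
  shows "(\<lambda>x. u x - cutoff e (u x)) \<in> Cc"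
proof -
  have "{x. u x - cutoff e (u x) \<noteq> 0} \<subseteq> {x. e \<le> cmod (u x)}"
  proof (rule subsetI, rule ccontr)
    fix x assume "x \<in> {x. u x - cutoff e (u x) \<noteq> 0}" "x \<notin> {x. e \<le> cmod (u x)}"
    then show False using cutoff_id[of "u x" e] by simp
  qed
  then show ?thesis using assms by (auto simp: Cc_def vanishes_at_infinity_def intro: finite_subset)
qed

locale cc_graph_measure = cc_graph b c for b :: "'x \<Rightarrow> 'x \<Rightarrow> real" and c +
  fixes m :: "'x \<Rightarrow> real"
  assumes m_pos: "\<forall>x. 0 < m x" and m_summable: "m summable_on UNIV"
begin

lemma m_nonneg: "0 \<le> m x"
  using m_pos less_imp_le by blast

lemma mem_ell2_iff: "f \<in> ell2 m \<longleftrightarrow> wsq m f summable_on UNIV"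
  by (simp add: ell2_def wsq_def[abs_def])

lemma l2norm_sq_eq: "l2norm_sq m f = infsum (wsq m f) UNIV"
  by (simp add: l2norm_sq_def wsq_def[abs_def])

lemma l2norm_sq_nonneg: "0 \<le> l2norm_sq m f"
  unfolding l2norm_sq_eq by (intro infsum_nonneg wsq_nonneg m_nonneg)

lemma Dt_ell2: "f \<in> Dt b c \<Longrightarrow> f \<in> ell2 m"
proof -
  assume "f \<in> Dt b c"
  then obtain M where M: "\<And>x. cmod (f x) \<le> M" using Dt_bounded by blast
  have "wsq m f x \<le> M\<^sup>2 * m x" for x
    using M[of x] m_nonneg[of x] by (auto simp: wsq_def mult.commute intro!: mult_left_mono power_mono)
  then show "f \<in> ell2 m" unfolding mem_ell2_iff
    by (rule summable_on_comparison_test[OF summable_on_cmult_right[OF m_summable]])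
      (simp add: wsq_nonneg m_nonneg)
qed

lemma DQD_subset_Dt_o: "DQD b c m \<subseteq> Dt_o b c x0"
proof
  fix u assume u: "u \<in> DQD b c m"
  have "\<exists>\<phi>\<in>Cc. Qt b c (u - \<phi>) + (cmod (u x0 - \<phi> x0))\<^sup>2 < \<epsilon>" if \<epsilon>: "\<epsilon> > 0" for \<epsilon>
  proof -
    define \<mu> where "\<mu> = min 1 (m x0)"
    have \<mu>: "0 < \<mu>" "\<mu> \<le> 1" "\<mu> \<le> m x0" using m_pos by (auto simp: \<mu>_def)
    obtain \<phi> where \<phi>: "\<phi> \<in> Cc" "Qt b c (u - \<phi>) + l2norm_sq m (u - \<phi>) < \<epsilon> * \<mu>"
      using u mult_pos_pos[OF \<epsilon> \<mu>(1)] unfolding DQD_def by blast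
    have "u - \<phi> \<in> ell2 m"
      using u Dt_diff[of u \<phi>] Cc_Dt[OF \<phi>(1)] Dt_ell2 by (auto simp: DQD_def fun_diff_def)
    then have "wsq m (u - \<phi>) x0 \<le> l2norm_sq m (u - \<phi>)"
      using finite_sum_le_infsum[of "wsq m (u - \<phi>)" UNIV "{x0}"]
      by (simp add: mem_ell2_iff l2norm_sq_eq wsq_nonneg m_nonneg)
    moreover have "\<mu> * (cmod (u x0 - \<phi> x0))\<^sup>2 \<le> wsq m (u - \<phi>) x0"
      using mult_right_mono[OF \<mu>(3) zero_le_power2] by (simp add: wsq_def)
    ultimately have "\<mu> * (cmod (u x0 - \<phi> x0))\<^sup>2 \<le> l2norm_sq m (u - \<phi>)" by linarith
    moreover have "\<mu> * Qt b c (u - \<phi>) \<le> Qt b c (u - \<phi>)"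
      using mult_right_mono[OF \<mu>(2) Qt_nonneg[of "u - \<phi>"]] by simp
    ultimately have "\<mu> * (Qt b c (u - \<phi>) + (cmod (u x0 - \<phi> x0))\<^sup>2) < \<epsilon> * \<mu>"
      using \<phi>(2) by (simp add: distrib_left)
    then show ?thesis using \<phi>(1) \<mu>(1) by (auto simp: mult.commute)
  qed
  then show "u \<in> Dt_o b c x0" using u by (simp add: Dt_o_def DQD_def)
qed

text \<open>Cutting a function vanishing at infinity at height \<open>e\<close> leaves a finitely supported part and a
  remainder that is small in energy and in \<open>\<ell>\<^sup>2\<close> (by \<open>wsq_small\<close>, as the cutoff is a normal contraction).\<close>
lemma vanishing_Dt_subset_DQD:
  assumes u: "u \<in> Dt b c" "vanishes_at_infinity u"
  shows "u \<in> DQD b c m"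
proof -
  have "\<exists>\<phi>\<in>Cc. Qt b c (u - \<phi>) + l2norm_sq m (u - \<phi>) < \<epsilon>" if \<epsilon>: "\<epsilon> > 0" for \<epsilon>
  proof -
    have \<epsilon>3: "\<epsilon>/3 > 0" using \<epsilon> by simp
    have sum: "wsq edge_weight (grad u) summable_on UNIV" "wsq c u summable_on UNIV" "wsq m u summable_on UNIV"
      using u(1) Dt_ell2[OF u(1)] by (simp_all add: mem_Dt_iff mem_ell2_iff)
    obtain \<delta>1 where \<delta>1: "\<delta>1 > 0" "\<And>a'. (\<And>e. cmod (a' e) \<le> cmod (grad u e)) \<Longrightarrow> (\<And>e. cmod (a' e) \<le> \<delta>1)
        \<Longrightarrow> infsum (wsq edge_weight a') UNIV < \<epsilon>/3"
      using wsq_small[OF edge_weight_nonneg sum(1) \<epsilon>3] by blast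
    obtain \<delta>2 where \<delta>2: "\<delta>2 > 0" "\<And>a'. (\<And>x. cmod (a' x) \<le> cmod (u x)) \<Longrightarrow> (\<And>x. cmod (a' x) \<le> \<delta>2)
        \<Longrightarrow> infsum (wsq c a') UNIV < \<epsilon>/3"
      using wsq_small[OF c_nonneg sum(2) \<epsilon>3] by blast
    obtain \<delta>3 where \<delta>3: "\<delta>3 > 0" "\<And>a'. (\<And>x. cmod (a' x) \<le> cmod (u x)) \<Longrightarrow> (\<And>x. cmod (a' x) \<le> \<delta>3)
        \<Longrightarrow> infsum (wsq m a') UNIV < \<epsilon>/3"
      using wsq_small[OF m_nonneg sum(3) \<epsilon>3] by blast
    define e where "e = min (\<delta>1/2) (min \<delta>2 \<delta>3)"
    have e: "e > 0" using \<delta>1 \<delta>2 \<delta>3 by (simp add: e_def)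
    define v where "v x = cutoff e (u x)" for x
    have v_le: "cmod (v x) \<le> cmod (u x)" "cmod (v x) \<le> e" for x
      using e by (simp_all add: v_def norm_cutoff_le norm_cutoff_le_bound)
    have v_small: "cmod (v x) \<le> \<delta>2" "cmod (v x) \<le> \<delta>3" for x
      using v_le(2)[of x] by (simp_all add: e_def)
    have grad_v_le: "cmod (grad v d) \<le> cmod (grad u d)" "cmod (grad v d) \<le> \<delta>1" for d
    proof -
      obtain x y where d: "d = (x,y)" by (cases d)
      show "cmod (grad v d) \<le> cmod (grad u d)"
        using e by (simp add: d grad_def v_def cutoff_lipschitz)
      have "cmod (grad v d) \<le> cmod (v x) + cmod (v y)"
        by (simp add: d grad_def norm_triangle_ineq4)
      then show "cmod (grad v d) \<le> \<delta>1" using v_le(2)[of x] v_le(2)[of y] by (simp add: e_def)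
    qed
    have "Qt b c v < \<epsilon>/3 / 2 + \<epsilon>/3"
      unfolding Qt_eq using \<delta>1(2)[OF grad_v_le] \<delta>2(2)[OF v_le(1) v_small(1)] by linarith
    moreover have "l2norm_sq m v < \<epsilon>/3"
      unfolding l2norm_sq_eq using \<delta>3(2)[OF v_le(1) v_small(2)] .
    moreover have "(\<lambda>x. u x - v x) \<in> Cc"
      unfolding v_def using u(2) e by (rule cutoff_remainder_Cc)
    moreover have "u - (\<lambda>x. u x - v x) = v" by (simp add: fun_eq_iff)
    ultimately show ?thesis using \<epsilon> by (intro bexI[of _ "\<lambda>x. u x - v x"]) auto
  qed
  then show ?thesis using u Dt_ell2 by (simp add: DQD_def)
qed

lemma DQD_eq_vanishing: "DQD b c m = {u \<in> Dt b c. vanishes_at_infinity u}"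
  and Dt_o_eq_vanishing: "Dt_o b c x0 = {u \<in> Dt b c. vanishes_at_infinity u}"
proof -
  have "DQD b c m \<subseteq> Dt_o b c x0" by (rule DQD_subset_Dt_o)
  moreover have "Dt_o b c x0 \<subseteq> {u \<in> Dt b c. vanishes_at_infinity u}"
    using Dt_o_vanishes_at_infinity by (auto simp: Dt_o_def)
  moreover have "{u \<in> Dt b c. vanishes_at_infinity u} \<subseteq> DQD b c m"
    using vanishing_Dt_subset_DQD by blast
  ultimately show "DQD b c m = {u \<in> Dt b c. vanishes_at_infinity u}"
    and "Dt_o b c x0 = {u \<in> Dt b c. vanishes_at_infinity u}" by auto
qed

end

lemma linf_iff: "f \<in> linf \<longleftrightarrow> (\<exists>M. \<forall>x. cmod (f x) \<le> M)"
  by (auto simp: linf_def bounded_iff)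

lemma linf_add: "f \<in> linf \<Longrightarrow> g \<in> linf \<Longrightarrow> (\<lambda>x. f x + g x) \<in> linf"
  by (simp add: linf_def bounded_plus_comp)

lemma linf_mult:
  assumes "f \<in> linf" "g \<in> linf" shows "(\<lambda>x. f x * g x) \<in> linf"
proof -
  obtain M N where "\<And>x. cmod (f x) \<le> M" "\<And>x. cmod (g x) \<le> N" using assms by (auto simp: linf_iff)
  then have "cmod (f x * g x) \<le> M * N" for x by (simp add: norm_mult mult_mono')
  then show ?thesis by (auto simp: linf_iff)
qed

lemma cstar_subalgebra_linf: "cstar_subalgebra (linf :: ('a \<Rightarrow> complex) set)"
  unfolding cstar_subalgebra_def
proof (intro conjI ballI allI impI subset_refl)
  have const: "(\<lambda>_. k) \<in> (linf :: ('a \<Rightarrow> complex) set)" for k by (auto simp: linf_iff)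
  then show "(\<lambda>_. 0) \<in> (linf :: ('a \<Rightarrow> complex) set)" .
  fix f :: "'a \<Rightarrow> complex" assume f: "f \<in> linf"
  show "(\<lambda>x. cnj (f x)) \<in> linf" using f by (simp add: linf_iff)
  show "(\<lambda>x. k * f x) \<in> linf" for k using linf_mult[OF const f] .
  fix g :: "'a \<Rightarrow> complex" assume g: "g \<in> linf"
  show "(\<lambda>x. f x + g x) \<in> linf" using linf_add[OF f g] .
  show "(\<lambda>x. f x * g x) \<in> linf" using linf_mult[OF f g] .
qed

lemma Aplus_subset_linf: "Aplus b c \<subseteq> linf"
  and Aalg_subset_Aplus: "Aalg b c \<subseteq> Aplus b c"
  and one_Aplus: "(\<lambda>_. 1) \<in> Aplus b c"
proof -
  have "Aalg b c \<subseteq> linf" "(\<lambda>_. 1) \<in> linf" by (auto simp: Aalg_def) (auto simp: linf_iff)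
  then show "Aplus b c \<subseteq> linf" unfolding Aplus_def using cstar_subalgebra_linf by blast
qed (auto simp: Aplus_def)

lemma mem_Aplus_iff:
  "f \<in> Aplus b c \<longleftrightarrow> (\<forall>S. cstar_subalgebra S \<longrightarrow> Aalg b c \<subseteq> S \<longrightarrow> (\<lambda>_. 1) \<in> S \<longrightarrow> f \<in> S)"
  by (auto simp: Aplus_def)

lemma Aplus_algebra:
  assumes "f \<in> Aplus b c" "g \<in> Aplus b c"
  shows "(\<lambda>x. f x + g x) \<in> Aplus b c \<and> (\<lambda>x. f x * g x) \<in> Aplus b c \<and> (\<lambda>x. k * f x) \<in> Aplus b c"
  unfolding mem_Aplus_iff
proof (intro conjI allI impI)
  fix S assume S: "cstar_subalgebra S" "Aalg b c \<subseteq> S" "(\<lambda>_. 1) \<in> S"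
  then have "f \<in> S" "g \<in> S" using assms by (simp_all add: mem_Aplus_iff)
  with S(1) show "(\<lambda>x. f x + g x) \<in> S" "(\<lambda>x. f x * g x) \<in> S" "(\<lambda>x. k * f x) \<in> S"
    unfolding cstar_subalgebra_def by simp_all
qed

lemma Aplus_add: "f \<in> Aplus b c \<Longrightarrow> g \<in> Aplus b c \<Longrightarrow> (\<lambda>x. f x + g x) \<in> Aplus b c"
  and Aplus_mult: "f \<in> Aplus b c \<Longrightarrow> g \<in> Aplus b c \<Longrightarrow> (\<lambda>x. f x * g x) \<in> Aplus b c"
  and Aplus_scale: "f \<in> Aplus b c \<Longrightarrow> (\<lambda>x. k * f x) \<in> Aplus b c"
  using Aplus_algebra by blast+

lemma Aplus_uniform_limit:
  assumes "g \<in> linf" "\<And>\<epsilon>. \<epsilon> > 0 \<Longrightarrow> \<exists>f\<in>Aplus b c. \<forall>x. cmod (g x - f x) \<le> \<epsilon>"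
  shows "g \<in> Aplus b c"
  unfolding mem_Aplus_iff
proof (intro allI impI)
  fix S assume S: "cstar_subalgebra S" "Aalg b c \<subseteq> S" "(\<lambda>_. 1) \<in> S"
  then have "Aplus b c \<subseteq> S" by (auto simp: mem_Aplus_iff)
  then have "\<forall>\<epsilon>>0. \<exists>f\<in>S. \<forall>x. cmod (g x - f x) \<le> \<epsilon>" using assms(2) by blast
  then show "g \<in> S" using S(1) assms(1) unfolding cstar_subalgebra_def by blast
qed

lemma Aplus_geometric_sum: "f \<in> Aplus b c \<Longrightarrow> (\<lambda>x. \<Sum>k<N. f x ^ k) \<in> Aplus b c"
proof (induction N)
  case 0 show ?case using Aplus_scale[OF one_Aplus, of 0] by simp
next
  case (Suc N)
  have "(\<lambda>x. f x ^ k) \<in> Aplus b c" for k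
    by (induction k) (use one_Aplus Aplus_mult[OF Suc.prems] in auto)
  then show ?case using Aplus_add[OF Suc.IH[OF Suc.prems]] by simp
qed

text \<open>The Neumann series \<open>\<Sum> r\<^sup>k\<close> converges uniformly.\<close>
lemma Aplus_inverse_one_minus:
  assumes r: "r \<in> Aplus b c" and rq: "\<And>x. cmod (r x) \<le> q" and q: "q < 1"
  shows "(\<lambda>x. 1 / (1 - r x)) \<in> Aplus b c"
proof (rule Aplus_uniform_limit)
  have gap: "1 - q \<le> cmod (1 - r x)" for x
    using norm_triangle_ineq2[of 1 "r x"] rq[of x] by (simp add: norm_minus_commute)
  have q0: "0 \<le> q" using rq[of undefined] norm_ge_zero order_trans by blast
  have r1: "r x \<noteq> 1" for x using rq[of x] q by auto
  have "cmod (1 / (1 - r x)) \<le> 1 / (1 - q)" for x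
    using gap[of x] q by (simp add: norm_divide frac_le)
  then show "(\<lambda>x. 1 / (1 - r x)) \<in> linf" by (auto simp: linf_iff)
  fix \<epsilon> :: real assume "\<epsilon> > 0"
  then obtain N where N: "q^N < \<epsilon> * (1 - q)"
    using real_arch_pow_inv[of "\<epsilon> * (1 - q)" q] q q0 by auto
  show "\<exists>g\<in>Aplus b c. \<forall>x. cmod (1 / (1 - r x) - g x) \<le> \<epsilon>"
  proof (intro bexI[OF _ Aplus_geometric_sum[OF r, of N]] allI)
    fix x
    have "cmod (1 / (1 - r x) - (\<Sum>k<N. r x ^ k)) = cmod (r x) ^ N / cmod (1 - r x)"
      using r1[of x] by (simp add: sum_gp_strict field_simps norm_divide norm_power)
    also have "\<dots> \<le> q ^ N / (1 - q)"
      using rq[of x] gap[of x] q q0 by (intro frac_le power_mono) auto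
    also have "\<dots> \<le> \<epsilon>" using N q by (simp add: field_simps)
    finally show "cmod (1 / (1 - r x) - (\<Sum>k<N. r x ^ k)) \<le> \<epsilon>" .
  qed
qed

lemma char_add: "\<gamma> \<in> characters b c \<Longrightarrow> f \<in> Aplus b c \<Longrightarrow> g \<in> Aplus b c \<Longrightarrow> \<gamma> (\<lambda>x. f x + g x) = \<gamma> f + \<gamma> g"
  and char_mult: "\<gamma> \<in> characters b c \<Longrightarrow> f \<in> Aplus b c \<Longrightarrow> g \<in> Aplus b c \<Longrightarrow> \<gamma> (\<lambda>x. f x * g x) = \<gamma> f * \<gamma> g"
  and char_scale: "\<gamma> \<in> characters b c \<Longrightarrow> f \<in> Aplus b c \<Longrightarrow> \<gamma> (\<lambda>x. k * f x) = k * \<gamma> f"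
  by (simp_all add: characters_def)

lemma char_one: assumes "\<gamma> \<in> characters b c" shows "\<gamma> (\<lambda>_. 1) = 1"
proof -
  obtain f where f: "f \<in> Aplus b c" "\<gamma> f \<noteq> 0" using assms by (auto simp: characters_def)
  have "\<gamma> f = \<gamma> f * \<gamma> (\<lambda>_. 1)" using char_mult[OF assms f(1) one_Aplus] by simp
  then show ?thesis using f(2) by simp
qed

text \<open>A character is bounded by the sup norm: if \<open>|\<gamma> f| > sup |f|\<close>, then \<open>1 - f / \<gamma> f\<close> would be
  invertible in \<open>A\<^sup>+\<close> (its inverse is a uniformly convergent Neumann series) and yet killed by \<open>\<gamma>\<close>.\<close>
lemma char_norm_le:
  assumes \<gamma>: "\<gamma> \<in> characters b c" and f: "f \<in> Aplus b c" and M: "\<And>x. cmod (f x) \<le> M"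
  shows "cmod (\<gamma> f) \<le> M"
proof (rule ccontr)
  assume "\<not> cmod (\<gamma> f) \<le> M"
  then have M\<gamma>: "M < cmod (\<gamma> f)" by simp
  have M0: "0 \<le> M" using M[of undefined] norm_ge_zero order_trans by blast
  define r where "r x = (1 / \<gamma> f) * f x" for x
  define q where "q = M / cmod (\<gamma> f)"
  have r: "r \<in> Aplus b c" unfolding r_def by (rule Aplus_scale[OF f])
  have q: "0 \<le> q" "q < 1" using M0 M\<gamma> by (auto simp: q_def divide_less_eq)
  have rq: "cmod (r x) \<le> q" for x
    using M[of x] M\<gamma> by (simp add: r_def q_def norm_mult norm_divide divide_right_mono)
  have r1: "r x \<noteq> 1" for x using rq[of x] q by auto
  define s where "s x = 1 / (1 - r x)" for x
  have s: "s \<in> Aplus b c" unfolding s_def using r rq q(2) by (rule Aplus_inverse_one_minus)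
  define h where "h x = 1 + (-1) * r x" for x
  have h: "h \<in> Aplus b c" unfolding h_def by (rule Aplus_add[OF one_Aplus Aplus_scale[OF r]])
  have "\<gamma> r = 1"
    using char_scale[OF \<gamma> f, of "1 / \<gamma> f"] M\<gamma> M0 unfolding r_def by auto
  then have "\<gamma> h = 0"
    unfolding h_def char_add[OF \<gamma> one_Aplus Aplus_scale[OF r]] char_scale[OF \<gamma> r] char_one[OF \<gamma>]
    by simp
  moreover have "(\<lambda>x. h x * s x) = (\<lambda>_. 1)"
    using r1 by (auto simp: fun_eq_iff h_def s_def field_simps)
  then have "\<gamma> h * \<gamma> s = 1" using char_mult[OF \<gamma> h s] char_one[OF \<gamma>] by simp
  ultimately show False by simp
qed

context cc_graph
begin

lemma Dt_subset_Aplus: "Dt b c \<subseteq> Aplus b c"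
proof
  fix u assume "u \<in> Dt b c"
  moreover from this have "u \<in> linf" using compactifiable by (auto simp: canonically_compactifiable_def)
  ultimately have "u \<in> Aalg b c" by (auto simp: Aalg_def intro!: bexI[of _ u])
  then show "u \<in> Aplus b c" using Aalg_subset_Aplus by blast
qed

lemma indicator_Aplus: "(indicator {z} :: 'x \<Rightarrow> complex) \<in> Aplus b c"
  using Dt_subset_Aplus indicator_Dt by blast

text \<open>The idempotent \<open>1\<^sub>{\<^sub>z\<^sub>}\<close> takes the value 0 or 1 under a character; in the latter case the
  character is the point evaluation at \<open>z\<close>, since \<open>f \<cdot> 1\<^sub>{\<^sub>z\<^sub>} = f(z) \<cdot> 1\<^sub>{\<^sub>z\<^sub>}\<close>.\<close>
lemma boundary_indicator:
  assumes \<gamma>: "\<gamma> \<in> boundary b c" shows "\<gamma> (indicator {z}) = 0"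
proof (rule ccontr)
  assume nz: "\<gamma> (indicator {z}) \<noteq> 0"
  have \<gamma>c: "\<gamma> \<in> characters b c" using \<gamma> by (simp add: boundary_def)
  have "(\<lambda>x. indicator {z} x * indicator {z} x) = (indicator {z} :: 'x \<Rightarrow> complex)"
    by (simp add: fun_eq_iff indicator_def)
  then have "\<gamma> (indicator {z}) = \<gamma> (indicator {z}) * \<gamma> (indicator {z})"
    using char_mult[OF \<gamma>c indicator_Aplus indicator_Aplus, of z z] by simp
  then have one: "\<gamma> (indicator {z}) = 1" using nz by (metis mult_cancel_left1)
  have "\<gamma> f = point_char b c z f" for f
  proof (cases "f \<in> Aplus b c")
    case True
    have "(\<lambda>x. f x * indicator {z} x) = (\<lambda>x. f z * indicator {z} x)"
      by (simp add: fun_eq_iff indicator_def)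
    then have "\<gamma> f * \<gamma> (indicator {z}) = \<gamma> (\<lambda>x. f z * indicator {z} x)"
      using char_mult[OF \<gamma>c True indicator_Aplus, of z, symmetric] by simp
    then show ?thesis using one char_scale[OF \<gamma>c indicator_Aplus] True by (simp add: point_char_def)
  qed (use \<gamma>c in \<open>simp add: point_char_def characters_def\<close>)
  then show False using \<gamma> by (auto simp: boundary_def)
qed

lemma boundary_Cc:
  assumes \<gamma>: "\<gamma> \<in> boundary b c" and "\<phi> \<in> Cc" shows "\<gamma> \<phi> = 0"
proof -
  have \<gamma>c: "\<gamma> \<in> characters b c" using \<gamma> by (simp add: boundary_def)
  from \<open>\<phi> \<in> Cc\<close> have "\<phi> \<in> Aplus b c \<and> \<gamma> \<phi> = 0"
  proof (induction rule: Cc_induct)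
    case zero then show ?case
      using Aplus_scale[OF one_Aplus, of 0] char_scale[OF \<gamma>c one_Aplus, of 0] by simp
  next
    case (indicator z) then show ?case using indicator_Aplus boundary_indicator[OF \<gamma>] by simp
  qed (simp_all add: Aplus_add Aplus_scale char_add[OF \<gamma>c] char_scale[OF \<gamma>c])
  then show ?thesis ..
qed

lemma boundary_vanishing:
  assumes u: "u \<in> Dt b c" "vanishes_at_infinity u" and \<gamma>: "\<gamma> \<in> boundary b c"
  shows "\<gamma> u = 0"
proof -
  have \<gamma>c: "\<gamma> \<in> characters b c" using \<gamma> by (simp add: boundary_def)
  have uA: "u \<in> Aplus b c" using u(1) Dt_subset_Aplus by blast
  have "cmod (\<gamma> u) \<le> \<epsilon>" if \<epsilon>: "\<epsilon> > 0" for \<epsilon>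
  proof -
    define \<phi> where "\<phi> x = (if \<epsilon> \<le> cmod (u x) then u x else 0)" for x
    have \<phi>: "\<phi> \<in> Cc"
      using u(2) \<epsilon> by (auto simp: \<phi>_def Cc_def vanishes_at_infinity_def intro: finite_subset)
    then have \<phi>A: "\<phi> \<in> Aplus b c" using Cc_Dt Dt_subset_Aplus by blast
    have "\<gamma> (\<lambda>x. u x + (-1) * \<phi> x) = \<gamma> u + (-1) * \<gamma> \<phi>"
      by (simp only: char_add[OF \<gamma>c uA Aplus_scale[OF \<phi>A]] char_scale[OF \<gamma>c \<phi>A])
    then have "\<gamma> (\<lambda>x. u x + (-1) * \<phi> x) = \<gamma> u" using boundary_Cc[OF \<gamma> \<phi>] by simp
    moreover have "cmod (u x + (-1) * \<phi> x) \<le> \<epsilon>" for x using \<epsilon> by (simp add: \<phi>_def)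
    ultimately show ?thesis using char_norm_le[OF \<gamma>c Aplus_add[OF uA Aplus_scale[OF \<phi>A]]] by metis
  qed
  then show ?thesis by (metis dual_order.antisym field_le_epsilon norm_eq_zero norm_ge_zero add_0)
qed

end

text \<open>By Tychonoff the point evaluations lie in a compact product, namely that of the closures of the
  ranges of the bounded functions \<open>f \<in> A\<^sup>+\<close>, so along any proper filter they have a cluster point.\<close>
lemma point_char_cluster_point:
  assumes "G \<noteq> bot"
  obtains \<gamma> where "\<And>C. closed C \<Longrightarrow> eventually (\<lambda>x. point_char b c x \<in> C) G \<Longrightarrow> \<gamma> \<in> C"
proof -
  define K where "K = Pi\<^sub>E UNIV (\<lambda>f. closure (range (\<lambda>x. point_char b c x f)))"
  have "bounded (range (\<lambda>x. point_char b c x f))" for f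
  proof (cases "f \<in> Aplus b c")
    case True
    then have "bounded (range f)" using Aplus_subset_linf by (auto simp: linf_def)
    then show ?thesis using True by (simp add: point_char_def)
  qed (simp add: point_char_def)
  then have "compact K" unfolding K_def by (intro compact_Pi_UNIV compact_closure[THEN iffD2])
  moreover have "eventually (\<lambda>\<gamma>. \<gamma> \<in> K) (filtermap (point_char b c) G)"
    unfolding eventually_filtermap K_def
    by (intro always_eventually allI) (auto simp: PiE_iff intro: closure_subset[THEN subsetD])
  moreover have "filtermap (point_char b c) G \<noteq> bot" using assms by (simp add: filtermap_bot_iff)
  ultimately obtain \<gamma> where \<gamma>: "inf (nhds \<gamma>) (filtermap (point_char b c) G) \<noteq> bot"
    using compact_filter by blast
  show ?thesis
    by (rule that, rule cluster_point_in_closed[OF \<gamma>]) (simp_all add: eventually_filtermap)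
qed

context cc_graph
begin

text \<open>If \<open>|u| \<ge> \<epsilon>\<close> on an infinite set \<open>S\<close>, take a cluster point of the \<open>\<delta>\<^sub>x\<close>, \<open>x \<in> S\<close>, along the
  cofinite filter: every algebraic identity of the \<open>\<delta>\<^sub>x\<close> is a closed condition and passes to it,
  so it is a character, and it kills every \<open>1\<^sub>{\<^sub>z\<^sub>}\<close>.\<close>
lemma boundary_char_if_not_vanishing:
  assumes u: "u \<in> Dt b c" and not_vanishing: "\<not> vanishes_at_infinity u"
  obtains \<gamma> where "\<gamma> \<in> boundary b c" "\<gamma> u \<noteq> 0"
proof -
  obtain \<epsilon> where \<epsilon>: "\<epsilon> > 0" and S: "infinite {x. \<epsilon> \<le> cmod (u x)}"
    using not_vanishing unfolding vanishes_at_infinity_def by auto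
  define G where "G = inf cofinite (principal {x. \<epsilon> \<le> cmod (u x)})"
  have "G \<noteq> bot"
    using S by (auto simp: G_def trivial_limit_def eventually_inf_principal eventually_cofinite)
  then obtain \<gamma> where limit: "\<And>C. closed C \<Longrightarrow> eventually (\<lambda>x. point_char b c x \<in> C) G \<Longrightarrow> \<gamma> \<in> C"
    using point_char_cluster_point[where b = b and c = c] by blast
  have "\<gamma> \<in> characters b c"
    unfolding characters_def
  proof (intro CollectI conjI ballI allI impI)
    fix f g assume f: "f \<in> Aplus b c" and g: "g \<in> Aplus b c"
    have "\<gamma> \<in> {\<gamma>. \<gamma> (\<lambda>x. f x + g x) = \<gamma> f + \<gamma> g}"
      by (rule limit, intro closed_Collect_eq continuous_intros) (simp_all add: point_char_def Aplus_add f g)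
    then show "\<gamma> (\<lambda>x. f x + g x) = \<gamma> f + \<gamma> g" by simp
    have "\<gamma> \<in> {\<gamma>. \<gamma> (\<lambda>x. f x * g x) = \<gamma> f * \<gamma> g}"
      by (rule limit, intro closed_Collect_eq continuous_intros) (simp_all add: point_char_def Aplus_mult f g)
    then show "\<gamma> (\<lambda>x. f x * g x) = \<gamma> f * \<gamma> g" by simp
  next
    fix k f assume f: "f \<in> Aplus b c"
    have "\<gamma> \<in> {\<gamma>. \<gamma> (\<lambda>x. k * f x) = k * \<gamma> f}"
      by (rule limit, intro closed_Collect_eq continuous_intros) (simp_all add: point_char_def Aplus_scale f)
    then show "\<gamma> (\<lambda>x. k * f x) = k * \<gamma> f" by simp
  next
    have "\<gamma> \<in> {\<gamma>. \<gamma> (\<lambda>_. 1) = 1}"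
      by (rule limit, intro closed_Collect_eq continuous_intros) (simp_all add: point_char_def one_Aplus)
    then show "\<exists>f\<in>Aplus b c. \<gamma> f \<noteq> 0" using one_Aplus by force
  next
    fix f assume "f \<notin> Aplus b c"
    then have "\<gamma> \<in> {\<gamma>. \<gamma> f = 0}"
      by (intro limit closed_Collect_eq continuous_intros) (simp_all add: point_char_def)
    then show "\<gamma> f = 0" by simp
  qed
  moreover have "\<gamma> \<noteq> point_char b c z" for z
  proof -
    have "eventually (\<lambda>x. x \<noteq> z) G"
      unfolding G_def eventually_inf_principal eventually_cofinite
      by (rule finite_subset[of _ "{z}"]) auto
    then have "\<gamma> \<in> {\<gamma>. \<gamma> (indicator {z}) = 0}"
      by (intro limit closed_Collect_eq continuous_intros) (simp_all add: point_char_def indicator_Aplus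
          eventually_mono)
    moreover have "point_char b c z (indicator {z}) = 1" using indicator_Aplus by (simp add: point_char_def)
    ultimately show ?thesis by auto
  qed
  moreover have "\<gamma> \<in> {\<gamma>. \<epsilon> \<le> cmod (\<gamma> u)}"
  proof (rule limit)
    show "closed {\<gamma>. \<epsilon> \<le> cmod (\<gamma> u)}" by (intro closed_Collect_le continuous_intros) simp
    show "eventually (\<lambda>x. point_char b c x \<in> {\<gamma>. \<epsilon> \<le> cmod (\<gamma> u)}) G"
      using u Dt_subset_Aplus by (auto simp: G_def eventually_inf_principal point_char_def)
  qed
  ultimately show ?thesis using that \<epsilon> by (force simp: boundary_def)
qed

lemma boundary_vanishing_iff:
  "{u \<in> Dt b c. \<forall>\<gamma>\<in>boundary b c. gelfand_hat u \<gamma> = 0} = {u \<in> Dt b c. vanishes_at_infinity u}"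
  using boundary_vanishing boundary_char_if_not_vanishing by (auto simp: gelfand_hat_def) metis

end

context wgraph
begin

definition div_grad :: "('x \<Rightarrow> complex) \<Rightarrow> 'x \<Rightarrow> complex" where
  "div_grad u x = (\<Sum>\<^sub>\<infinity>y. complex_of_real (b x y) * (u x - u y))"

lemma row_abs_summable:
  assumes "u \<in> Dt b c" shows "(\<lambda>y. b x y * cmod (u x - u y)) summable_on UNIV"
proof -
  have "(\<lambda>(x,y). b x y * (cmod (u x - u y))\<^sup>2) summable_on Sigma UNIV (\<lambda>_. UNIV)"
    using assms by (simp add: Dt_def Qt_finite_def)
  then have "(\<lambda>y. b x y * (cmod (u x - u y))\<^sup>2) summable_on UNIV"
    by (rule summable_on_SigmaD1[where f = "\<lambda>x y. b x y * (cmod (u x - u y))\<^sup>2"]) simp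
  then have "wsq (b x) (\<lambda>y. u x - u y) summable_on UNIV" by (simp add: wsq_def[abs_def])
  moreover have "wsq (b x) (\<lambda>_. 1) summable_on UNIV" using b_summable by (simp add: wsq_def[abs_def])
  ultimately have "(\<lambda>y. complex_of_real (b x y) * cnj 1 * (u x - u y)) summable_on UNIV"
    using b_nonneg by (intro wsq_inner_summable)
  then show ?thesis by (simp add: summable_on_iff_abs_summable_on_complex norm_mult b_nonneg)
qed

text \<open>Summation by parts, using the symmetry of \<open>b\<close>.\<close>
lemma energy_pairing_Cc:
  assumes u: "u \<in> Dt b c" and \<phi>: "\<phi> \<in> Cc"
  shows "(\<Sum>\<^sub>\<infinity>e. complex_of_real (edge_weight e) * cnj (grad u e) * grad \<phi> e)
    = 2 * (\<Sum>\<^sub>\<infinity>x. cnj (div_grad u x) * \<phi> x)"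
proof -
  have F: "finite {x. \<phi> x \<noteq> 0}" using \<phi> by (simp add: Cc_def)
  define T where "T = (\<lambda>(x,y). complex_of_real (b x y) * cnj (u x - u y) * \<phi> x)"
  have "(\<lambda>e. cmod (T e)) summable_on UNIV \<times> UNIV"
  proof (rule summable_on_SigmaI)
    show "((\<lambda>y. cmod (T (x, y))) has_sum cmod (\<phi> x) * (\<Sum>\<^sub>\<infinity>y. b x y * cmod (u x - u y))) UNIV" for x
      using has_sum_cmult_right[OF has_sum_infsum[OF row_abs_summable[OF u]], of "cmod (\<phi> x)" x]
      by (simp add: T_def norm_mult b_nonneg mult_ac flip: complex_cnj_diff)
    show "(\<lambda>x. cmod (\<phi> x) * (\<Sum>\<^sub>\<infinity>y. b x y * cmod (u x - u y))) summable_on UNIV"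
      by (rule finite_nonzero_values_imp_summable_on, rule finite_subset[OF _ F]) auto
  qed simp
  then have T: "T summable_on UNIV" by (simp add: summable_on_iff_abs_summable_on_complex)
  have "(\<Sum>\<^sub>\<infinity>e. T e) = (\<Sum>\<^sub>\<infinity>x. \<Sum>\<^sub>\<infinity>y. T (x,y))"
    using infsum_Sigma_banach[of T UNIV "\<lambda>_. UNIV"] T by simp
  also have "\<dots> = (\<Sum>\<^sub>\<infinity>x. cnj (div_grad u x) * \<phi> x)"
    by (simp add: T_def div_grad_def infsum_cmult_left' flip: infsum_cnj)
  finally have T_sum: "(\<Sum>\<^sub>\<infinity>e. T e) = (\<Sum>\<^sub>\<infinity>x. cnj (div_grad u x) * \<phi> x)" .
  have swap: "(\<Sum>\<^sub>\<infinity>e. T (prod.swap e)) = (\<Sum>\<^sub>\<infinity>e. T e)"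
    by (rule infsum_reindex_bij_betw[OF bij_swap])
  have "(\<lambda>e. T (prod.swap e)) summable_on UNIV"
    using summable_on_reindex_bij_betw[OF bij_swap, of T] T by simp
  moreover have "(\<lambda>e. complex_of_real (edge_weight e) * cnj (grad u e) * grad \<phi> e) = (\<lambda>e. T e + T (prod.swap e))"
    by (auto simp: fun_eq_iff edge_weight_def grad_def T_def b_sym algebra_simps)
  ultimately show ?thesis using T swap T_sum by (simp add: infsum_add)
qed

end

context cc_graph_measure
begin

lemma inner_m_eq: "inner_m m w v = (\<Sum>\<^sub>\<infinity>x. complex_of_real (m x) * cnj (w x) * v x)"
  unfolding inner_m_def by (simp add: algebra_simps)

lemma Qform_eq: "Qform b c u v = 1/2 * (\<Sum>\<^sub>\<infinity>e. complex_of_real (edge_weight e) * cnj (grad u e) * grad v e)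
    + (\<Sum>\<^sub>\<infinity>x. complex_of_real (c x) * cnj (u x) * v x)"
proof -
  have "(\<lambda>(x,y). complex_of_real (b x y) * cnj (u x - u y) * (v x - v y))
      = (\<lambda>e. complex_of_real (edge_weight e) * cnj (grad u e) * grad v e)"
    by (auto simp: fun_eq_iff edge_weight_def grad_def)
  then show ?thesis by (simp add: Qform_def)
qed

lemma Qform_Cc_eq_inner_Lt:
  assumes u: "u \<in> Dt b c" and \<phi>: "\<phi> \<in> Cc"
  shows "Qform b c u \<phi> = inner_m m (Lt b c m u) \<phi>"
proof -
  have F: "finite {x. \<phi> x \<noteq> 0}" using \<phi> by (simp add: Cc_def)
  have "complex_of_real (m x) * cnj (Lt b c m u x) = cnj (div_grad u x) + complex_of_real (c x) * cnj (u x)" for x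
  proof -
    have "m x \<noteq> 0" using m_pos by (metis less_irrefl)
    then show ?thesis by (simp add: Lt_def div_grad_def of_real_divide field_simps flip: infsum_cnj)
  qed
  then have "inner_m m (Lt b c m u) \<phi>
      = (\<Sum>\<^sub>\<infinity>x. cnj (div_grad u x) * \<phi> x + complex_of_real (c x) * cnj (u x) * \<phi> x)"
    unfolding inner_m_eq by (simp add: algebra_simps)
  also have "\<dots> = (\<Sum>\<^sub>\<infinity>x. cnj (div_grad u x) * \<phi> x) + (\<Sum>\<^sub>\<infinity>x. complex_of_real (c x) * cnj (u x) * \<phi> x)"
    by (intro infsum_add finite_nonzero_values_imp_summable_on finite_subset[OF _ F]) auto
  also have "\<dots> = Qform b c u \<phi>"
    unfolding Qform_eq energy_pairing_Cc[OF u \<phi>] by simp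
  finally show ?thesis by simp
qed

lemma Qform_norm_le:
  assumes u: "u \<in> Dt b c" and h: "h \<in> Dt b c"
  shows "cmod (Qform b c u h) \<le> 2 * sqrt (Qt b c u) * sqrt (Qt b c h)"
proof -
  define P where "P = (\<Sum>\<^sub>\<infinity>e. complex_of_real (edge_weight e) * cnj (grad u e) * grad h e)"
  define C where "C = (\<Sum>\<^sub>\<infinity>x. complex_of_real (c x) * cnj (u x) * h x)"
  have su: "wsq edge_weight (grad u) summable_on UNIV" "wsq c u summable_on UNIV"
    and sh: "wsq edge_weight (grad h) summable_on UNIV" "wsq c h summable_on UNIV"
    using u h by (auto simp: mem_Dt_iff)
  have sqrt_mono: "sqrt A * sqrt B \<le> sqrt A' * sqrt B'" if "0 \<le> A" "0 \<le> B" "A \<le> A'" "B \<le> B'"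
    for A B A' B' :: real
    using that by (intro mult_mono real_sqrt_le_mono) auto
  have "cmod P \<le> sqrt (infsum (wsq edge_weight (grad u)) UNIV) * sqrt (infsum (wsq edge_weight (grad h)) UNIV)"
    unfolding P_def by (rule norm_infsum_wsq_inner_le[OF edge_weight_nonneg su(1) sh(1)])
  also have "\<dots> \<le> sqrt (2 * Qt b c u) * sqrt (2 * Qt b c h)"
    by (intro sqrt_mono infsum_energy_le_Qt infsum_nonneg wsq_nonneg edge_weight_nonneg)
  also have "\<dots> = 2 * (sqrt (Qt b c u) * sqrt (Qt b c h))" by (simp add: real_sqrt_mult)
  finally have P: "cmod P \<le> 2 * (sqrt (Qt b c u) * sqrt (Qt b c h))" .
  have "cmod C \<le> sqrt (infsum (wsq c u) UNIV) * sqrt (infsum (wsq c h) UNIV)"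
    unfolding C_def by (rule norm_infsum_wsq_inner_le[OF c_nonneg su(2) sh(2)])
  also have "\<dots> \<le> sqrt (Qt b c u) * sqrt (Qt b c h)"
    by (intro sqrt_mono infsum_killing_le_Qt infsum_nonneg wsq_nonneg c_nonneg)
  finally have C: "cmod C \<le> sqrt (Qt b c u) * sqrt (Qt b c h)" .
  have "cmod (Qform b c u h) \<le> cmod P / 2 + cmod C"
    unfolding Qform_eq P_def[symmetric] C_def[symmetric]
    using norm_triangle_ineq[of "1/2 * P" C] by (simp add: norm_mult)
  then show ?thesis using P C by linarith
qed

lemma Qform_diff:
  assumes "u \<in> Dt b c" "v \<in> Dt b c" "\<phi> \<in> Dt b c"
  shows "Qform b c u (\<lambda>x. v x - \<phi> x) = Qform b c u v - Qform b c u \<phi>"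
proof -
  have "grad (\<lambda>x. v x - \<phi> x) = (\<lambda>e. grad v e - grad \<phi> e)" by (auto simp: grad_def fun_eq_iff)
  then show ?thesis
    using assms unfolding Qform_eq mem_Dt_iff
    by (simp only: infsum_wsq_inner_diff[OF edge_weight_nonneg] infsum_wsq_inner_diff[OF c_nonneg])
      (simp add: algebra_simps)
qed

lemma inner_m_norm_le:
  "w \<in> ell2 m \<Longrightarrow> h \<in> ell2 m \<Longrightarrow> cmod (inner_m m w h) \<le> sqrt (l2norm_sq m w) * sqrt (l2norm_sq m h)"
  unfolding inner_m_eq l2norm_sq_eq mem_ell2_iff by (rule norm_infsum_wsq_inner_le[OF m_nonneg])

lemma inner_m_diff:
  "w \<in> ell2 m \<Longrightarrow> v \<in> ell2 m \<Longrightarrow> \<phi> \<in> ell2 m \<Longrightarrow>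
    inner_m m w (\<lambda>x. v x - \<phi> x) = inner_m m w v - inner_m m w \<phi>"
  unfolding inner_m_eq mem_ell2_iff by (rule infsum_wsq_inner_diff[OF m_nonneg])

lemma inner_m_indicator: "inner_m m w (indicator {z}) = complex_of_real (m z) * cnj (w z)"
proof -
  have "((\<lambda>x. complex_of_real (m x) * cnj (w x) * indicator {z} x) has_sum
      complex_of_real (m z) * cnj (w z)) UNIV"
    by (rule has_sum_finite_neutralI[where B = "{z}"]) auto
  then show ?thesis by (simp add: inner_m_eq infsumI)
qed

lemma Cc_DQD: "\<phi> \<in> Cc \<Longrightarrow> \<phi> \<in> DQD b c m"
  using Cc_Dt Cc_vanishes_at_infinity DQD_eq_vanishing by blast

lemma LD_rel_imp_eq_Lt:
  assumes "LD_rel b c m u w" shows "w = Lt b c m u"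
proof
  fix z
  have u: "u \<in> Dt b c" and rel: "\<forall>v\<in>DQD b c m. Qform b c u v = inner_m m w v"
    using assms by (auto simp: LD_rel_def DQD_def)
  have ind: "(indicator {z} :: 'x \<Rightarrow> complex) \<in> Cc" by (simp add: Cc_def indicator_def)
  have "complex_of_real (m z) * cnj (w z) = Qform b c u (indicator {z})"
    using rel Cc_DQD[OF ind] by (simp add: inner_m_indicator)
  also have "\<dots> = complex_of_real (m z) * cnj (Lt b c m u z)"
    by (simp add: Qform_Cc_eq_inner_Lt[OF u ind] inner_m_indicator)
  finally show "w z = Lt b c m u z"
    using m_pos by (metis complex_cnj_cancel_iff less_irrefl mult_cancel_left of_real_eq_0_iff)
qed

text \<open>\<open>Lt u\<close> represents \<open>Qform u\<close> on \<open>C\<^sub>c\<close> by Green's formula, and both sides are continuous in the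
  form norm, in which \<open>C\<^sub>c\<close> is dense in \<open>DQD\<close>.\<close>
lemma LD_rel_Lt:
  assumes u: "u \<in> DQD b c m" and L: "Lt b c m u \<in> ell2 m"
  shows "LD_rel b c m u (Lt b c m u)"
  unfolding LD_rel_def
proof (intro conjI ballI u L)
  fix v assume v: "v \<in> DQD b c m"
  define w where "w = Lt b c m u"
  define D where "D = Qform b c u v - inner_m m w v"
  define K where "K = 2 * sqrt (Qt b c u) + sqrt (l2norm_sq m w)"
  have uD: "u \<in> Dt b c" and vD: "v \<in> Dt b c" "v \<in> ell2 m" and w: "w \<in> ell2 m"
    using u v L by (auto simp: DQD_def w_def)
  have K: "0 \<le> K" unfolding K_def by (simp add: Qt_nonneg l2norm_sq_nonneg)
  have bound: "cmod D \<le> K * sqrt \<delta>" if \<delta>: "\<delta> > 0" for \<delta>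
  proof -
    obtain \<phi> where \<phi>: "\<phi> \<in> Cc" "Qt b c (v - \<phi>) + l2norm_sq m (v - \<phi>) < \<delta>"
      using v \<delta> unfolding DQD_def by blast
    define h where "h x = v x - \<phi> x" for x
    have \<phi>D: "\<phi> \<in> Dt b c" "\<phi> \<in> ell2 m" using Cc_Dt[OF \<phi>(1)] Dt_ell2 by auto
    have hD: "h \<in> Dt b c" "h \<in> ell2 m" using Dt_diff[OF vD(1) \<phi>D(1)] Dt_ell2 by (auto simp: h_def[abs_def])
    have small: "Qt b c h \<le> \<delta>" "l2norm_sq m h \<le> \<delta>"
      using \<phi>(2) Qt_nonneg[of h] l2norm_sq_nonneg[of h] by (auto simp: h_def[abs_def] fun_diff_def)
    have "D = Qform b c u h - inner_m m w h"
      using Qform_Cc_eq_inner_Lt[OF uD \<phi>(1)] unfolding D_def w_def h_def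
      by (simp add: Qform_diff[OF uD vD(1) \<phi>D(1)] inner_m_diff[OF L vD(2) \<phi>D(2)])
    then have "cmod D \<le> cmod (Qform b c u h) + cmod (inner_m m w h)"
      by (simp add: norm_triangle_ineq4)
    also have "\<dots> \<le> 2 * sqrt (Qt b c u) * sqrt (Qt b c h) + sqrt (l2norm_sq m w) * sqrt (l2norm_sq m h)"
      by (intro add_mono Qform_norm_le[OF uD hD(1)] inner_m_norm_le[OF w hD(2)])
    also have "\<dots> \<le> K * sqrt \<delta>"
      using small by (simp add: K_def distrib_right mult_left_mono add_mono Qt_nonneg l2norm_sq_nonneg)
    finally show ?thesis .
  qed
  have "cmod D \<le> \<epsilon>" if "\<epsilon> > 0" for \<epsilon>
  proof -
    have "cmod D \<le> K * (\<epsilon> / (K + 1))"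
      using bound[of "(\<epsilon> / (K + 1))\<^sup>2"] that K by simp
    also have "\<dots> \<le> \<epsilon>" using that K by (simp add: field_simps)
    finally show ?thesis .
  qed
  then have "D = 0" by (metis norm_le_zero_iff field_le_epsilon add_0)
  then show "Qform b c u v = inner_m m (Lt b c m u) v" by (simp add: D_def w_def)
qed

lemma DLD_eq: "DLD b c m = {f \<in> DQD b c m. Lt b c m f \<in> ell2 m}"
  using LD_rel_imp_eq_Lt LD_rel_Lt by (auto simp: DLD_def LD_rel_def)

lemma LD_eq_Lt: "f \<in> DLD b c m \<Longrightarrow> LD b c m f = Lt b c m f"
  unfolding LD_def DLD_eq using LD_rel_Lt LD_rel_imp_eq_Lt by (intro the_equality) auto

end

theorem mainTheorem15:
  fixes b :: "'x::countable \<Rightarrow> 'x \<Rightarrow> real" and c :: "'x \<Rightarrow> real"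
    and m :: "'x \<Rightarrow> real" and x0 :: 'x
  assumes "infinite (UNIV :: 'x set)"
    and "weighted_graph b c"
    and "connected_graph b"
    and "canonically_compactifiable b c"
    and "\<forall>x. 0 < m x"
    and "m summable_on UNIV"
  shows "DQD b c m = {u \<in> Dt b c. \<forall>\<gamma>\<in>boundary b c. gelfand_hat u \<gamma> = 0}
    \<and> {u \<in> Dt b c. \<forall>\<gamma>\<in>boundary b c. gelfand_hat u \<gamma> = 0} = Dt_o b c x0
    \<and> DLD b c m = {f \<in> Dt b c. (\<forall>\<gamma>\<in>boundary b c. gelfand_hat f \<gamma> = 0) \<and> Lt b c m f \<in> ell2 m}
    \<and> (\<forall>f\<in>DLD b c m. LD b c m f = Lt b c m f)"
proof -
  interpret cc_graph_measure b c m
    by unfold_locales (use assms in \<open>auto simp: wgraph_def\<close>)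
  have "DQD b c m = {u \<in> Dt b c. \<forall>\<gamma>\<in>boundary b c. gelfand_hat u \<gamma> = 0}"
    and "Dt_o b c x0 = {u \<in> Dt b c. \<forall>\<gamma>\<in>boundary b c. gelfand_hat u \<gamma> = 0}"
    using boundary_vanishing_iff DQD_eq_vanishing Dt_o_eq_vanishing by auto
  then show ?thesis using DLD_eq LD_eq_Lt by auto
qed

end
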